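(* Let $\tau$ be the semicircle law, and let $K(f)=-\mathscr{J}^*(\mathscr{J}f)-f$. Let $g\in\mathscr{A}$ be cyclically symmetric and $f=\mathscr{D}g$. Then $$K(f)=\mathscr{D}\Big\{(1\otimes\tau+\tau\otimes1)\Big(\sum_i[\mathscr{J}f]_{ii}\Big)-f\#X\Big\}=\mathscr{D}\Big\{(1\otimes\tau+\tau\otimes1)\big(Tr[\mathscr{J}\mathscr{D}g]\big)-\mathscr{N}g\Big\}.$$
   Context: $\mathscr{A}=\mathbb{C}\langle X_1,\dots,X_n\rangle$. A polynomial is cyclically symmetric if for all $i_1,\dots,i_k$ the coefficient of $X_{i_1}\cdots X_{i_k}$ equals that of $X_{i_k}X_{i_1}\cdots X_{i_{k-1}}$. $\mathscr{N}$ multiplies each monomial of degree $k$ by $k$. $\partial_j$: derivation $\mathscr{A}\to\mathscr{A}\otimes\mathscr{A}^{op}$ with $\partial_jX_i=\delta_{ij}1\otimes1$; $\mathscr{D}_jq=\sum_{q=BX_jC}CB$; $\mathscr{D}g=(\mathscr{D}_jg)_j$; $\mathscr{J}f=(\partial_jf_i)_{i,j}$; $Tr(q)=\sum_iq_{ii}$; $g\#h=\sum_ig_ih_i$ for vectors; $(1\otimes\tau+\tau\otimes1)(a\otimes b)=a\tau(b)+\tau(a)b$. The semicircle law $\tau$ is the law of a free semicircular family $S_1,\dots,S_n$ (each with semicircle distribution on $[-2,2]$ of variance 1). $\partial_j^*$ is the adjoint of $\partial_j$ as a densely defined operator $L^2(\tau)\to L^2(\tau\otimes\tau)$, and $\mathscr{J}^*q=(\sum_i\partial_i^*(q_{ji}))_j$;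 for the semicircle law $\partial_j^*(1\otimes1)=X_j$. *)

theory Defs
  imports Complex_Main "HOL-Library.Poly_Mapping"
begin

text \<open>Noncommutative polynomials in variables X_0, X_1, ... : finitely supported
  coefficient functions on words (nat lists). The word [i1,...,ik] stands for the
  monomial X_i1 ... X_ik.  Elements of A tensor A^op are finitely supported
  coefficient functions on pairs of words; (u,v) stands for the monomial u tensor v.\<close>

type_synonym ncpoly = "nat list \<Rightarrow>\<^sub>0 complex"
type_synonym nctens = "(nat list \<times> nat list) \<Rightarrow>\<^sub>0 complex"

definition ncpolys :: "nat \<Rightarrow> ncpoly set" where
  "ncpolys n = {p. \<forall>w\<in>Poly_Mapping.keys p. set w \<subseteq> {..<n}}"

definition ncvar :: "nat \<Rightarrow> ncpoly" where
  "ncvar i = Poly_Mapping.single [i] 1"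

definition ncmult :: "ncpoly \<Rightarrow> ncpoly \<Rightarrow> ncpoly" where
  "ncmult p q = (\<Sum>u\<in>Poly_Mapping.keys p. \<Sum>v\<in>Poly_Mapping.keys q.
      Poly_Mapping.single (u @ v) (Poly_Mapping.lookup p u * Poly_Mapping.lookup q v))"

definition ncstar :: "ncpoly \<Rightarrow> ncpoly" where
  "ncstar p = (\<Sum>w\<in>Poly_Mapping.keys p. Poly_Mapping.single (rev w) (cnj (Poly_Mapping.lookup p w)))"

definition cyc_symm :: "ncpoly \<Rightarrow> bool" where
  "cyc_symm g = (\<forall>w. w \<noteq> [] \<longrightarrow> Poly_Mapping.lookup g w = Poly_Mapping.lookup g (last w # butlast w))"

definition ncN :: "ncpoly \<Rightarrow> ncpoly" where
  "ncN p = (\<Sum>w\<in>Poly_Mapping.keys p. Poly_Mapping.single w (of_nat (length w) * Poly_Mapping.lookup p w))"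

definition ncpartial :: "nat \<Rightarrow> ncpoly \<Rightarrow> nctens" where
  "ncpartial j p = (\<Sum>w\<in>Poly_Mapping.keys p. \<Sum>k<length w.
      if w ! k = j then Poly_Mapping.single (take k w, drop (Suc k) w) (Poly_Mapping.lookup p w) else 0)"

definition ncD :: "nat \<Rightarrow> ncpoly \<Rightarrow> ncpoly" where
  "ncD j p = (\<Sum>w\<in>Poly_Mapping.keys p. \<Sum>k<length w.
      if w ! k = j then Poly_Mapping.single (drop (Suc k) w @ take k w) (Poly_Mapping.lookup p w) else 0)"

text \<open>Moments of a free semicircular family (variance 1): tau(X_i1...X_ik) is the
  number of non-crossing pair partitions of {1..k} pairing only equal indices,
  computed by pairing the first letter with a later occurrence of the same letter.\<close>
function sc_moment :: "nat list \<Rightarrow> nat" where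
  "sc_moment [] = 1"
| "sc_moment (i # w) = (\<Sum>k<length w.
      if w ! k = i then sc_moment (take k w) * sc_moment (drop (Suc k) w) else 0)"
  by pat_completeness auto
termination
  by (relation "measure length") auto

definition tau :: "ncpoly \<Rightarrow> complex" where
  "tau p = (\<Sum>w\<in>Poly_Mapping.keys p. Poly_Mapping.lookup p w * of_nat (sc_moment w))"

text \<open>L^2(tau) inner product (linear in the second argument).\<close>
definition inner_tau :: "ncpoly \<Rightarrow> ncpoly \<Rightarrow> complex" where
  "inner_tau p q = tau (ncmult (ncstar p) q)"

text \<open>L^2(tau tensor tau) inner product on A tensor A^op:
  <a tensor b, c tensor d> = tau(a* c) tau(b* d).\<close>
definition inner_tau2 :: "nctens \<Rightarrow> nctens \<Rightarrow> complex" where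
  "inner_tau2 \<xi> \<eta> = (\<Sum>(u,v)\<in>Poly_Mapping.keys \<xi>. \<Sum>(u',v')\<in>Poly_Mapping.keys \<eta>.
      cnj (Poly_Mapping.lookup \<xi> (u,v)) * Poly_Mapping.lookup \<eta> (u',v')
      * of_nat (sc_moment (rev u @ u')) * of_nat (sc_moment (rev v @ v')))"

definition partial_adj :: "nat \<Rightarrow> nat \<Rightarrow> nctens \<Rightarrow> ncpoly" where
  "partial_adj n j \<xi> = (THE p. p \<in> ncpolys n \<and>
      (\<forall>q\<in>ncpolys n. inner_tau2 (ncpartial j q) \<xi> = inner_tau q p))"

text \<open>(1 tensor tau + tau tensor 1)(a tensor b) = a tau(b) + tau(a) b.\<close>
definition tauE :: "nctens \<Rightarrow> ncpoly" where
  "tauE \<xi> = (\<Sum>(u,v)\<in>Poly_Mapping.keys \<xi>.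
      Poly_Mapping.single u (Poly_Mapping.lookup \<xi> (u,v) * of_nat (sc_moment v))
    + Poly_Mapping.single v (of_nat (sc_moment u) * Poly_Mapping.lookup \<xi> (u,v)))"

text \<open>Vectors of n polynomials are functions nat => ncpoly (entries i < n used).\<close>

definition ncJ :: "(nat \<Rightarrow> ncpoly) \<Rightarrow> nat \<Rightarrow> nat \<Rightarrow> nctens" where
  "ncJ f i j = ncpartial j (f i)"

definition ncJadj :: "nat \<Rightarrow> (nat \<Rightarrow> nat \<Rightarrow> nctens) \<Rightarrow> nat \<Rightarrow> ncpoly" where
  "ncJadj n q j = (\<Sum>i<n. partial_adj n i (q j i))"

definition ncK :: "nat \<Rightarrow> (nat \<Rightarrow> ncpoly) \<Rightarrow> nat \<Rightarrow> ncpoly" where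
  "ncK n f j = - ncJadj n (ncJ f) j - f j"

definition ncTr :: "nat \<Rightarrow> (nat \<Rightarrow> nat \<Rightarrow> nctens) \<Rightarrow> nctens" where
  "ncTr n q = (\<Sum>i<n. q i i)"

definition nchash :: "nat \<Rightarrow> (nat \<Rightarrow> ncpoly) \<Rightarrow> (nat \<Rightarrow> ncpoly) \<Rightarrow> ncpoly" where
  "nchash n g h = (\<Sum>i<n. ncmult (g i) (h i))"

end

theory Submission
  imports Defs
begin

text \<open>Both sides are linear in \<open>g\<close>, so it suffices to compare them on a monomial \<open>X\<^sub>w\<close>.
  The key input is an explicit formula for the adjoint,
  \<open>\<partial>\<^sub>i\<^sup>*(a \<otimes> b) = a X\<^sub>i b - a \<cdot> (\<tau> \<otimes> 1)(\<partial>\<^sub>i b) - (1 \<otimes> \<tau>)(\<partial>\<^sub>i a) \<cdot> b\<close>,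
  which holds because the semicircular moments are tracial and satisfy the Schwinger--Dyson
  recursion; it is the unique adjoint since \<open>\<tau>\<close> is faithful, which we see by realising
  \<open>\<tau>\<close> as the vacuum state of the free creation and annihilation operators on the full Fock
  space. With this formula, \<open>\<Sum>\<^sub>i \<partial>\<^sub>i\<^sup>*\<partial>\<^sub>i\<close> maps a word of length \<open>m\<close> to \<open>m\<close> times
  itself minus correction terms, and after a cyclic reindexing the corrections produced by
  \<open>\<partial>\<^sub>i\<^sup>*\<partial>\<^sub>i \<D>\<^sub>j X\<^sub>w\<close> are exactly \<open>\<D>\<^sub>j\<close> of \<open>(1 \<otimes> \<tau> + \<tau> \<otimes> 1) Tr \<J>\<D> X\<^sub>w\<close>.
  Finally, for cyclically symmetric \<open>g\<close> Euler's relation \<open>\<D>g # X = \<N>g\<close> holds, since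
  \<open>\<Sum>\<^sub>i (\<D>\<^sub>i X\<^sub>w) X\<^sub>i\<close> is the sum of all cyclic rotations of \<open>w\<close>.\<close>

abbreviation single :: "'k \<Rightarrow> complex \<Rightarrow> 'k \<Rightarrow>\<^sub>0 complex" where "single \<equiv> Poly_Mapping.single"

abbreviation lookup :: "('k \<Rightarrow>\<^sub>0 complex) \<Rightarrow> 'k \<Rightarrow> complex" where "lookup \<equiv> Poly_Mapping.lookup"

abbreviation keys :: "('k \<Rightarrow>\<^sub>0 complex) \<Rightarrow> 'k set" where "keys \<equiv> Poly_Mapping.keys"

section \<open>Linear extension from monomials\<close>

text \<open>A map out of polynomials is given by its values \<open>F w c\<close> on the monomials \<open>c X\<^sub>w\<close>;
  additivity in the coefficient \<open>c\<close> is all the linearity needed below.\<close>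

definition linext :: "('k \<Rightarrow> complex \<Rightarrow> 'b::comm_monoid_add) \<Rightarrow> ('k \<Rightarrow>\<^sub>0 complex) \<Rightarrow> 'b" where
  "linext F p = (\<Sum>w\<in>keys p. F w (lookup p w))"

definition coeff_additive :: "('k \<Rightarrow> complex \<Rightarrow> 'b::ab_group_add) \<Rightarrow> bool" where
  "coeff_additive F \<longleftrightarrow> (\<forall>w a b. F w (a + b) = F w a + F w b)"

lemma coeff_additiveI: "(\<And>w a b. F w (a + b) = F w a + F w b) \<Longrightarrow> coeff_additive F"
  unfolding coeff_additive_def by blast

lemma coeff_additiveD: "coeff_additive F \<Longrightarrow> F w (a + b) = F w a + F w b"
  unfolding coeff_additive_def by blast

lemma coeff_additive_zero: "coeff_additive F \<Longrightarrow> F w 0 = 0"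
  using coeff_additiveD[of F w 0 0] by simp

lemma linext_zero[simp]: "linext F 0 = 0"
  by (simp add: linext_def)

lemma linext_superset:
  assumes "coeff_additive F" "finite S" "keys p \<subseteq> S"
  shows "linext F p = (\<Sum>w\<in>S. F w (lookup p w))"
  unfolding linext_def
  by (rule sum.mono_neutral_left) (use assms coeff_additive_zero in \<open>auto simp: in_keys_iff\<close>)

lemma linext_add:
  assumes "coeff_additive F" shows "linext F (p + q) = linext F p + linext F q"
proof -
  let ?S = "keys p \<union> keys q"
  have k: "keys (p + q) \<subseteq> ?S" by (rule keys_add)
  have "linext F (p + q) = (\<Sum>w\<in>?S. F w (lookup (p+q) w))" by (rule linext_superset[OF assms _ k]) simp
  also have "\<dots> = (\<Sum>w\<in>?S. F w (lookup p w)) + (\<Sum>w\<in>?S. F w (lookup q w))"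
    by (simp add: lookup_add coeff_additiveD[OF assms] sum.distrib)
  also have "\<dots> = linext F p + linext F q"
    by (subst (1 2) linext_superset[OF assms]) auto
  finally show ?thesis .
qed

lemma linext_uminus: assumes "coeff_additive F" shows "linext F (- p) = - linext F p"
proof -
  have "linext F (- p) + linext F p = 0" using linext_add[OF assms, of "-p" p] by simp
  thus ?thesis by (simp add: eq_neg_iff_add_eq_0)
qed

lemma linext_diff: assumes "coeff_additive F" shows "linext F (p - q) = linext F p - linext F q"
  using linext_add[OF assms, of p "-q"] linext_uminus[OF assms, of q] by simp

lemma linext_sum: assumes "coeff_additive F" shows "linext F (\<Sum>x\<in>S. f x) = (\<Sum>x\<in>S. linext F (f x))"
  by (induction S rule: infinite_finite_induct) (simp_all add: linext_add[OF assms])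

lemma linext_single: assumes "coeff_additive F" shows "linext F (single w c) = F w c"
  by (cases "c = 0") (simp_all add: linext_def coeff_additive_zero[OF assms])

lemma linext_comp: assumes "coeff_additive G" shows "linext G (linext F p) = linext (\<lambda>w c. linext G (F w c)) p"
proof -
  have "linext G (linext F p) = (\<Sum>w\<in>keys p. linext G (F w (lookup p w)))"
    by (simp only: linext_def[of F p] linext_sum[OF assms])
  also have "\<dots> = linext (\<lambda>w c. linext G (F w c)) p" by (simp only: linext_def[of "\<lambda>w c. linext G (F w c)"])
  finally show ?thesis .
qed

lemma linext_cong: "(\<And>w c. w \<in> keys p \<Longrightarrow> F w c = F' w c) \<Longrightarrow> linext F p = linext F' p"
  by (simp add: linext_def)

lemma linext_add_fun: "linext (\<lambda>x c. F x c + G x c) p = linext F p + linext G p"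
  unfolding linext_def by (simp add: sum.distrib)

lemma linext_diff_fun: "linext (\<lambda>x c. F x c - G x c) p = linext F p - linext G p"
  for F G :: "'k \<Rightarrow> complex \<Rightarrow> 'b::ab_group_add"
  unfolding linext_def by (simp add: sum_subtractf)

lemma linext_sum_fun: "linext (\<lambda>x c. \<Sum>k\<in>S. F k x c) p = (\<Sum>k\<in>S. linext (F k) p)"
  unfolding linext_def by (rule sum.swap)

lemma linext_if_fun: "linext (\<lambda>x c. if P then F x c else 0) p = (if P then linext F p else 0)"
  unfolding linext_def by simp

lemma linext_sum_if: "coeff_additive F \<Longrightarrow> linext F (\<Sum>k\<in>S. if P k then x k else 0) = (\<Sum>k\<in>S. if P k then linext F (x k) else 0)"
  by (simp add: linext_sum if_distrib[where f = "linext F"] cong: if_cong)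

lemma linext_sum_if_single:
  assumes "coeff_additive G"
  shows "linext G (\<Sum>k\<in>S. if P k then single (X k) (c k) else 0) = (\<Sum>k\<in>S. if P k then G (X k) (c k) else 0)"
  by (simp add: linext_sum[OF assms] linext_single[OF assms] if_distrib[where f = "linext G"] cong: if_cong)

lemma linext_single_id: "linext (\<lambda>w c. single w c) p = p"
proof (rule poly_mapping_eqI)
  fix z
  show "lookup (linext (\<lambda>w c. single w c) p) z = lookup p z"
    by (auto simp: linext_def lookup_sum lookup_single when_def in_keys_iff sum.delta)
qed

lemma linext_expand:
  assumes "\<And>a b. L (a + b) = L a + L b" "L 0 = (0::'b::comm_monoid_add)"
  shows "L p = linext (\<lambda>w c. L (single w c)) p"
proof -
  have "L p = L (linext (\<lambda>w c. single w c) p)" by (simp add: linext_single_id)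
  also have "\<dots> = linext (\<lambda>w c. L (single w c)) p"
    unfolding linext_def using sum_comp_morphism[of L, OF assms(2,1), symmetric] by (simp add: comp_def)
  finally show ?thesis .
qed

definition supported_in :: "'k set \<Rightarrow> ('k \<Rightarrow>\<^sub>0 complex) set" where
  "supported_in G = {p. keys p \<subseteq> G}"

lemma supported_in_zero[simp]: "0 \<in> supported_in G" by (simp add: supported_in_def)

lemma supported_in_single: "w \<in> G \<Longrightarrow> single w c \<in> supported_in G" by (simp add: supported_in_def)

lemma supported_in_add: "p \<in> supported_in G \<Longrightarrow> q \<in> supported_in G \<Longrightarrow> p + q \<in> supported_in G"
  unfolding supported_in_def using keys_add[of p q] by auto

lemma supported_in_uminus: "p \<in> supported_in G \<Longrightarrow> - p \<in> supported_in G"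
  unfolding supported_in_def by (auto simp: in_keys_iff)

lemma supported_in_diff: "p \<in> supported_in G \<Longrightarrow> q \<in> supported_in G \<Longrightarrow> p - q \<in> supported_in G"
  using supported_in_add[of p G "-q"] supported_in_uminus[of q G] by simp

lemma supported_in_sum: "(\<And>x. x \<in> S \<Longrightarrow> f x \<in> supported_in G) \<Longrightarrow> (\<Sum>x\<in>S. f x) \<in> supported_in G"
  by (induction S rule: infinite_finite_induct) (auto intro: supported_in_add)

lemma supported_in_if: "(P \<Longrightarrow> p \<in> supported_in G) \<Longrightarrow> (if P then p else 0) \<in> supported_in G" by auto

lemma supported_in_linext: "(\<And>w c. w \<in> keys p \<Longrightarrow> F w c \<in> supported_in G) \<Longrightarrow> linext F p \<in> supported_in G"
  unfolding linext_def by (rule supported_in_sum) auto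

lemma keys_supported_in: "p \<in> supported_in G \<Longrightarrow> w \<in> keys p \<Longrightarrow> w \<in> G" by (auto simp: supported_in_def)

section \<open>Semicircular moments\<close>

text \<open>\<open>fock_coeff w z\<close> is the coefficient of \<open>e\<^sub>z\<close> in \<open>X\<^sub>w \<Omega>\<close> on the full Fock space, where
  \<open>X\<^sub>i = l\<^sub>i + l\<^sub>i\<^sup>*\<close> is the sum of the creation and annihilation operators; the two summands
  of the recursion are \<open>l\<^sub>i\<^sup>*\<close> and \<open>l\<^sub>i\<close>. The semicircular moments are the vacuum coefficients.\<close>

fun fock_coeff :: "nat list \<Rightarrow> nat list \<Rightarrow> nat" where
  "fock_coeff [] z = (if z = [] then 1 else 0)"
| "fock_coeff (i # w) z = (case z of [] \<Rightarrow> 0 | x # z' \<Rightarrow> if x = i then fock_coeff w z' else 0) + fock_coeff w (i # z)"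

lemma fock_coeff_nonzero: "fock_coeff w z \<noteq> 0 \<Longrightarrow> length z \<le> length w \<and> set z \<subseteq> set w"
proof (induction w arbitrary: z)
  case Nil then show ?case by (simp split: if_splits)
next
  case (Cons i w)
  show ?case
  proof (cases "fock_coeff w (i # z) = 0")
    case True
    with Cons.prems have "(case z of [] \<Rightarrow> 0 | x # z' \<Rightarrow> if x = i then fock_coeff w z' else 0) \<noteq> 0" by simp
    then obtain z' where z: "z = i # z'" "fock_coeff w z' \<noteq> 0" by (auto split: list.splits if_splits)
    with Cons.IH[of z'] show ?thesis by auto
  next
    case False
    with Cons.IH[of "i # z"] show ?thesis by auto
  qed
qed

lemma fock_coeff_short: "length w < length z \<Longrightarrow> fock_coeff w z = 0"
  using fock_coeff_nonzero by fastforce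

lemma fock_coeff_same_length: "length z = length w \<Longrightarrow> fock_coeff w z = (if z = w then 1 else 0)"
proof (induction w arbitrary: z)
  case Nil then show ?case by simp
next
  case (Cons i w)
  then obtain x z' where z: "z = x # z'" by (cases z) auto
  have "fock_coeff w (i # z) = 0" by (rule fock_coeff_short) (use Cons.prems in simp)
  with Cons z show ?case by auto
qed

lemma sum_triangle_reindex: "(\<Sum>k<L. \<Sum>m<k. h m k) = (\<Sum>m<L. \<Sum>k<L - Suc m. h m (Suc m + k)) "
  for h :: "nat \<Rightarrow> nat \<Rightarrow> 'a::comm_monoid_add"
proof (induction L)
  case 0 then show ?case by simp
next
  case (Suc L)
  have "(\<Sum>m<Suc L. \<Sum>k<Suc L - Suc m. h m (Suc m + k)) = (\<Sum>m<L. \<Sum>k<Suc L - Suc m. h m (Suc m + k))"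
    by simp
  also have "\<dots> = (\<Sum>m<L. (\<Sum>k<L - Suc m. h m (Suc m + k)) + h m L)"
  proof (rule sum.cong)
    fix m assume "m \<in> {..<L}"
    then have "Suc L - Suc m = Suc (L - Suc m)" by auto
    moreover have "Suc m + (L - Suc m) = L" using \<open>m \<in> {..<L}\<close> by auto
    ultimately show "(\<Sum>k<Suc L - Suc m. h m (Suc m + k)) = (\<Sum>k<L - Suc m. h m (Suc m + k)) + h m L"
      by simp
  qed simp
  finally show ?case using Suc by (simp add: sum.distrib)
qed

text \<open>The letter \<open>i\<close> in front of \<open>e\<^sub>i\<^sub>#\<^sub>z\<close> was created by some letter \<open>w!k = i\<close>, and the part of
  \<open>w\<close> before it must have returned to the vacuum.\<close>

lemma fock_coeff_Cons_split:
  "fock_coeff w (i # z) = (\<Sum>k<length w. if w!k = i then fock_coeff (take k w) [] * fock_coeff (drop (Suc k) w) z else 0)"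
proof (induction w arbitrary: i z rule: length_induct)
  case (1 w)
  have IH: "\<And>u i z. length u < length w \<Longrightarrow> fock_coeff u (i#z) =
     (\<Sum>k<length u. if u!k = i then fock_coeff (take k u) [] * fock_coeff (drop (Suc k) u) z else 0)"
    using 1 by blast
  show ?case
  proof (cases w)
    case Nil then show ?thesis by simp
  next
    case (Cons x w')
    define T where "T = (\<lambda>m k. if w'!m = x \<and> w'!k = i then
        fock_coeff (take m w') [] * (fock_coeff (take (k - Suc m) (drop (Suc m) w')) [] * fock_coeff (drop (Suc k) w') z) else 0)"
    have "fock_coeff w' (x # i # z) = (\<Sum>m<length w'. if w'!m = x then fock_coeff (take m w') [] * fock_coeff (drop (Suc m) w') (i#z) else 0)"
      using IH[of w' x "i # z"] Cons by simp
    also have "\<dots> = (\<Sum>m<length w'. \<Sum>k<length w' - Suc m. T m (Suc m + k))"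
    proof (rule sum.cong)
      fix m assume m: "m \<in> {..<length w'}"
      have "fock_coeff (drop (Suc m) w') (i#z) = (\<Sum>k<length w' - Suc m. if w'!(Suc m + k) = i then
         fock_coeff (take k (drop (Suc m) w')) [] * fock_coeff (drop (Suc (Suc m + k)) w') z else 0)"
      proof -
        have dd: "\<And>k. drop (Suc k) (drop (Suc m) w') = drop (Suc (Suc m + k)) w'" by (simp add: add.commute)
        show ?thesis using IH[of "drop (Suc m) w'" i z] Cons by (simp only: dd) (simp add: add.commute)
      qed
      then show "(if w'!m = x then fock_coeff (take m w') [] * fock_coeff (drop (Suc m) w') (i#z) else 0) =
          (\<Sum>k<length w' - Suc m. T m (Suc m + k))"
        by (simp add: T_def sum_distrib_left if_distrib if_distribR cong: if_cong)
    qed simp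
    also have "\<dots> = (\<Sum>k<length w'. \<Sum>m<k. T m k)" by (rule sum_triangle_reindex[symmetric])
    finally have A: "fock_coeff w' (x # i # z) = (\<Sum>k<length w'. \<Sum>m<k. T m k)" .
    have B: "(\<Sum>k<length w. if w!k = i then fock_coeff (take k w) [] * fock_coeff (drop (Suc k) w) z else 0)
       = (if x = i then fock_coeff w' z else 0) + (\<Sum>k<length w'. if w'!k = i then fock_coeff (x # take k w') [] * fock_coeff (drop (Suc k) w') z else 0)"
      unfolding Cons by (simp only: length_Cons sum.lessThan_Suc_shift) (simp cong: if_cong)
    have C: "(if w'!k = i then fock_coeff (x # take k w') [] * fock_coeff (drop (Suc k) w') z else 0) = (\<Sum>m<k. T m k)"
      if k: "k < length w'" for k
    proof -
      have "fock_coeff (x # take k w') [] = fock_coeff (take k w') [x]" by simp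
      also have "\<dots> = (\<Sum>m<k. if w'!m = x then fock_coeff (take m w') [] * fock_coeff (drop (Suc m) (take k w')) [] else 0)"
        using IH[of "take k w'" x "[]"] Cons k by (auto simp: min_def intro!: sum.cong)
      finally show ?thesis
        by (simp add: T_def sum_distrib_right drop_take if_distrib if_distribR mult.assoc cong: if_cong)
    qed
    show ?thesis using A B C Cons by simp
  qed
qed

lemma sc_moment_fock_coeff: "sc_moment w = fock_coeff w []"
proof (induction w rule: length_induct)
  case (1 w)
  show ?case
  proof (cases w)
    case Nil then show ?thesis by simp
  next
    case (Cons i w')
    have "sc_moment w = (\<Sum>k<length w'. if w'!k = i then sc_moment (take k w') * sc_moment (drop (Suc k) w') else 0)"
      using Cons by simp
    also have "\<dots> = (\<Sum>k<length w'. if w'!k = i then fock_coeff (take k w') [] * fock_coeff (drop (Suc k) w') [] else 0)"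
      by (rule sum.cong) (use 1 Cons in auto)
    also have "\<dots> = fock_coeff w' [i]" by (rule fock_coeff_Cons_split[symmetric])
    finally show ?thesis using Cons by simp
  qed
qed

definition bounded_words :: "nat set \<Rightarrow> nat \<Rightarrow> nat list set" where
  "bounded_words A N = {z. set z \<subseteq> A \<and> length z \<le> N}"

lemma finite_bounded_words: "finite A \<Longrightarrow> finite (bounded_words A N)"
  unfolding bounded_words_def by (rule finite_lists_length_le)

lemma sum_bounded_words_fock_coeff_Nil:
  assumes "finite A"
  shows "(\<Sum>z\<in>bounded_words A N. f z * fock_coeff [] z) = f []"
proof -
  have "(\<Sum>z\<in>bounded_words A N. f z * fock_coeff [] z) = (\<Sum>z\<in>bounded_words A N. if z = [] then f z else 0)"
    by (rule sum.cong) auto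
  also have "\<dots> = f []"
    using finite_bounded_words[OF assms] by (simp add: sum.delta' bounded_words_def)
  finally show ?thesis .
qed

text \<open>The annihilation operator \<open>l\<^sub>i\<^sup>*\<close> is the adjoint of the creation operator \<open>l\<^sub>i\<close>
  on the span of the words of length at most \<open>N\<close>, provided \<open>h\<close> vanishes on the top layer.\<close>

lemma sum_bounded_words_Cons_shift:
  fixes h g :: "nat list \<Rightarrow> nat"
  assumes A: "finite A" "i \<in> A" and hN: "\<And>z. length z = N \<Longrightarrow> h z = 0"
  shows "(\<Sum>z\<in>bounded_words A N. h z * g (i # z)) =
    (\<Sum>z\<in>bounded_words A N. (case z of [] \<Rightarrow> 0 | x # z' \<Rightarrow> if x = i then h z' else 0) * g z)"
proof -
  define Z where "Z = bounded_words A N"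
  have fZ: "finite Z" unfolding Z_def by (rule finite_bounded_words[OF A(1)])
  let ?S = "{z\<in>Z. length z < N}"
  let ?annih = "\<lambda>z. case z of [] \<Rightarrow> 0 | x # z' \<Rightarrow> if x = i then h z' else 0"
  have "(\<Sum>z\<in>Z. h z * g (i#z)) = (\<Sum>z\<in>?S. h z * g (i#z))"
    by (rule sum.mono_neutral_right) (use fZ hN in \<open>auto simp: Z_def bounded_words_def\<close>)
  also have "\<dots> = (\<Sum>y\<in>Cons i ` ?S. ?annih y * g y)"
    by (subst sum.reindex) (auto simp: inj_on_def)
  also have "\<dots> = (\<Sum>z\<in>Z. ?annih z * g z)"
  proof (rule sum.mono_neutral_left[OF fZ])
    show "Cons i ` ?S \<subseteq> Z" using A by (auto simp: Z_def bounded_words_def)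
    show "\<forall>y\<in>Z - Cons i ` ?S. ?annih y * g y = 0"
    proof
      fix y assume y: "y \<in> Z - Cons i ` ?S"
      show "?annih y * g y = 0"
      proof (cases y)
        case (Cons x z')
        show ?thesis
        proof (cases "x = i")
          case True
          with y Cons have "length z' = N" by (auto simp: Z_def bounded_words_def)
          with hN Cons True show ?thesis by simp
        qed (simp add: Cons)
      qed simp
    qed
  qed
  finally show ?thesis unfolding Z_def .
qed

lemma fock_coeff_inner:
  assumes "finite A" "set u \<subseteq> A" "set v \<subseteq> A" "length u + length v < N"
  shows "(\<Sum>z\<in>bounded_words A N. fock_coeff u z * fock_coeff v z) = fock_coeff (rev u @ v) []"
  using assms(2-4)
proof (induction u arbitrary: v)
  case Nil
  show ?case
    using sum_bounded_words_fock_coeff_Nil[OF assms(1), of "fock_coeff v" N] by (simp add: mult.commute)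
next
  case (Cons i u)
  let ?Z = "bounded_words A N"
  have iA: "i \<in> A" using Cons by auto
  have h1: "fock_coeff u z = 0" if "length z = N" for z using Cons.prems that by (intro fock_coeff_short) auto
  have h2: "fock_coeff v z = 0" if "length z = N" for z using Cons.prems that by (intro fock_coeff_short) auto
  have "(\<Sum>z\<in>?Z. fock_coeff (i # u) z * fock_coeff v z) =
     (\<Sum>z\<in>?Z. (case z of [] \<Rightarrow> 0 | x # z' \<Rightarrow> if x = i then fock_coeff u z' else 0) * fock_coeff v z)
     + (\<Sum>z\<in>?Z. fock_coeff v z * fock_coeff u (i # z))"
    by (subst sum.distrib[symmetric], rule sum.cong) (simp_all add: algebra_simps)
  also have "\<dots> = (\<Sum>z\<in>?Z. fock_coeff u z * fock_coeff v (i # z))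
     + (\<Sum>z\<in>?Z. (case z of [] \<Rightarrow> 0 | x # z' \<Rightarrow> if x = i then fock_coeff v z' else 0) * fock_coeff u z)"
    using sum_bounded_words_Cons_shift[OF assms(1) iA h1, where g="fock_coeff v"]
      sum_bounded_words_Cons_shift[OF assms(1) iA h2, where g="fock_coeff u"]
    by simp
  also have "\<dots> = (\<Sum>z\<in>?Z. fock_coeff u z * fock_coeff (i # v) z)"
    by (simp add: distrib_left sum.distrib mult.commute)
  also have "\<dots> = fock_coeff (rev u @ i # v) []"
    using Cons.IH[of "i # v"] Cons.prems by simp
  finally show ?case by simp
qed

lemma sc_moment_rev: "sc_moment (rev w) = sc_moment w"
proof -
  have "fock_coeff (rev w @ []) [] = (\<Sum>z\<in>bounded_words (set w) (Suc (length w)). fock_coeff w z * fock_coeff [] z)"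
    by (rule fock_coeff_inner[symmetric]) auto
  also have "\<dots> = fock_coeff w []"
    by (rule sum_bounded_words_fock_coeff_Nil) simp
  finally show ?thesis by (simp add: sc_moment_fock_coeff)
qed

lemma sc_moment_snoc: "sc_moment (w @ [x]) = sc_moment (x # w)"
proof -
  let ?n = "length w"
  have "sc_moment (w @ [x]) = sc_moment (x # rev w)" by (subst sc_moment_rev[symmetric]) simp
  also have "\<dots> = (\<Sum>k<?n. if rev w ! k = x then sc_moment (take k (rev w)) * sc_moment (drop (Suc k) (rev w)) else 0)"
    by simp
  also have "\<dots> = (\<Sum>k<?n. (\<lambda>k. if w ! k = x then sc_moment (take k w) * sc_moment (drop (Suc k) w) else 0) (?n - Suc k))"
  proof (rule sum.cong)
    fix k assume k: "k \<in> {..<?n}"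
    have t: "take k (rev w) = rev (drop (?n - k) w)" using k by (simp add: rev_drop)
    have d: "drop (Suc k) (rev w) = rev (take (?n - Suc k) w)" using k by (simp add: rev_take)
    have e: "Suc (?n - Suc k) = ?n - k" using k by auto
    show "(if rev w ! k = x then sc_moment (take k (rev w)) * sc_moment (drop (Suc k) (rev w)) else 0) =
      (\<lambda>k. if w ! k = x then sc_moment (take k w) * sc_moment (drop (Suc k) w) else 0) (?n - Suc k)"
      using k by (simp add: t d e sc_moment_rev rev_nth mult.commute)
  qed simp
  also have "\<dots> = sc_moment (x # w)"
    by (rule trans[OF sum.nat_diff_reindex[where g = "\<lambda>k. if w ! k = x then sc_moment (take k w) * sc_moment (drop (Suc k) w) else 0"]]) simp
  finally show ?thesis .
qed

lemma sc_moment_append_commute: "sc_moment (u @ v) = sc_moment (v @ u)"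
proof (induction u arbitrary: v)
  case (Cons x u)
  have "sc_moment ((x # u) @ v) = sc_moment ((u @ v) @ [x])" by (simp only: sc_moment_snoc append_Cons)
  also have "\<dots> = sc_moment (v @ x # u)" using Cons[of "v @ [x]"] by simp
  finally show ?case .
qed simp

lemma sc_moment_gram:
  fixes S :: "nat list set" and c :: "nat list \<Rightarrow> complex"
  assumes fS: "finite S"
  defines "Z \<equiv> bounded_words (\<Union>(set ` S)) (Suc (2 * Max (length ` S)))"
  shows "(\<Sum>u\<in>S. \<Sum>v\<in>S. cnj (c u) * c v * of_nat (sc_moment (rev u @ v))) =
    of_real (\<Sum>z\<in>Z. (cmod (\<Sum>v\<in>S. c v * of_nat (fock_coeff v z)))\<^sup>2)"
proof -
  define s where "s z = (\<Sum>v\<in>S. c v * of_nat (fock_coeff v z))" for z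
  have lenM: "length u \<le> Max (length ` S)" if "u \<in> S" for u using that fS by simp
  have scZ: "sc_moment (rev u @ v) = (\<Sum>z\<in>Z. fock_coeff u z * fock_coeff v z)" if "u \<in> S" "v \<in> S" for u v
  proof -
    have len: "length u + length v < Suc (2 * Max (length ` S))"
      using lenM[OF that(1)] lenM[OF that(2)] by linarith
    show ?thesis
      unfolding Z_def sc_moment_fock_coeff by (rule fock_coeff_inner[symmetric]) (use fS that len in auto)
  qed
  have "(\<Sum>u\<in>S. \<Sum>v\<in>S. cnj (c u) * c v * of_nat (sc_moment (rev u @ v)))
      = (\<Sum>u\<in>S. \<Sum>v\<in>S. \<Sum>z\<in>Z. (cnj (c u) * of_nat (fock_coeff u z)) * (c v * of_nat (fock_coeff v z)))"
    by (intro sum.cong refl) (simp add: scZ sum_distrib_left algebra_simps)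
  also have "\<dots> = (\<Sum>z\<in>Z. \<Sum>u\<in>S. \<Sum>v\<in>S. (cnj (c u) * of_nat (fock_coeff u z)) * (c v * of_nat (fock_coeff v z)))"
  proof -
    have "(\<Sum>v\<in>S. \<Sum>z\<in>Z. (cnj (c u) * of_nat (fock_coeff u z)) * (c v * of_nat (fock_coeff v z))) =
      (\<Sum>z\<in>Z. \<Sum>v\<in>S. (cnj (c u) * of_nat (fock_coeff u z)) * (c v * of_nat (fock_coeff v z)))" for u
      by (rule sum.swap)
    then show ?thesis by (simp only:) (rule sum.swap)
  qed
  also have "\<dots> = (\<Sum>z\<in>Z. cnj (s z) * s z)"
    by (simp add: s_def sum_product)
  also have "\<dots> = (\<Sum>z\<in>Z. complex_of_real ((cmod (s z))\<^sup>2))"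
    by (rule sum.cong) (simp_all only: complex_norm_square[symmetric] mult.commute[of "cnj _"])
  finally show ?thesis by (simp add: s_def)
qed

text \<open>Faithfulness of \<open>\<tau>\<close>: by the Gram representation, a vanishing norm forces all Fock
  coefficients to vanish, and at a longest word \<open>u\<close> with \<open>c u \<noteq> 0\<close> the Fock coefficient is
  \<open>c u\<close> itself, because \<open>X\<^sub>u\<Omega>\<close> is \<open>e\<^sub>u\<close> plus shorter words.\<close>

lemma sc_moment_gram_faithful:
  fixes S :: "nat list set" and c :: "nat list \<Rightarrow> complex"
  assumes fS: "finite S"
    and z0: "(\<Sum>u\<in>S. \<Sum>v\<in>S. cnj (c u) * c v * of_nat (sc_moment (rev u @ v))) = 0"
  shows "\<forall>u\<in>S. c u = 0"
proof (rule ccontr)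
  define T where "T = {u\<in>S. c u \<noteq> 0}"
  assume "\<not> (\<forall>u\<in>S. c u = 0)"
  then have fT: "finite T" and Tne: "T \<noteq> {}" using fS by (auto simp: T_def)
  define Z where "Z = bounded_words (\<Union>(set ` S)) (Suc (2 * Max (length ` S)))"
  define s where "s z = (\<Sum>v\<in>S. c v * of_nat (fock_coeff v z))" for z
  have "complex_of_real (\<Sum>z\<in>Z. (cmod (s z))\<^sup>2) = 0"
    using sc_moment_gram[OF fS, of c] z0 by (simp only: Z_def s_def)
  then have "(\<Sum>z\<in>Z. (cmod (s z))\<^sup>2) = 0" by (simp only: of_real_eq_0_iff)
  then have s0: "\<forall>z\<in>Z. s z = 0"
    using finite_bounded_words[of _ "Suc (2 * Max (length ` S))"] fS by (simp add: Z_def sum_nonneg_eq_0_iff)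
  have "Max (length ` T) \<in> length ` T" using fT Tne by (intro Max_in) auto
  then obtain u where uT: "u \<in> T" and lu: "length u = Max (length ` T)" by auto
  have top: "length v \<le> length u" if "v \<in> T" for v using that fT lu by simp
  have "s u = (\<Sum>v\<in>S. if v = u then c v else 0)"
    unfolding s_def
  proof (rule sum.cong)
    fix v assume vS: "v \<in> S"
    show "c v * of_nat (fock_coeff v u) = (if v = u then c v else 0)"
    proof (cases "c v = 0")
      case False
      then have "length v \<le> length u" using vS top by (simp add: T_def)
      then show ?thesis
        by (cases "length v = length u") (auto simp: fock_coeff_same_length fock_coeff_short)
    qed auto
  qed simp
  also have "\<dots> = c u" using uT fS by (simp add: T_def)
  finally have "s u = c u" .
  moreover have "u \<in> Z"
  proof -
    have "u \<in> S" using uT by (simp add: T_def)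
    then have "length u \<le> Max (length ` S)" using fS by simp
    then show ?thesis using \<open>u \<in> S\<close> by (auto simp: Z_def bounded_words_def)
  qed
  ultimately show False using s0 uT by (simp add: T_def)
qed

lemma sum_lessThan_add: "(\<Sum>k<x+y. f k) = (\<Sum>k<x. f k) + (\<Sum>k<y. (f (x + k) :: 'a::comm_monoid_add))"
  for x y :: nat
  by (induction y) (simp_all add: add.assoc)

text \<open>The Schwinger--Dyson equation \<open>\<tau>(P X\<^sub>i Q) = (\<tau> \<otimes> \<tau>)(\<partial>\<^sub>i(Q P))\<close> in word form: after rotating
  the marked \<open>X\<^sub>i\<close> to the front, the recursion of \<open>sc_moment\<close> pairs it with a letter of \<open>b\<close>,
  of \<open>rev s\<close> or of \<open>a\<close>.\<close>

lemma sc_moment_letter_expansion: "sc_moment (rev s @ a @ i # b) =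
  (\<Sum>k<length s. if s!k = i then sc_moment (rev (take k s) @ a) * sc_moment (rev (drop (Suc k) s) @ b) else 0)
 + (\<Sum>k<length b. if b!k = i then sc_moment (take k b) * sc_moment (rev s @ a @ drop (Suc k) b) else 0)
 + (\<Sum>k<length a. if a!k = i then sc_moment (drop (Suc k) a) * sc_moment (rev s @ take k a @ b) else 0)"
proof -
  define L where "L = b @ rev s @ a"
  define F where "F k = (if L!k = i then sc_moment (take k L) * sc_moment (drop (Suc k) L) else 0)" for k
  have "sc_moment (rev s @ a @ i # b) = sc_moment (i # L)"
    using sc_moment_append_commute[of "rev s @ a" "i # b"] by (simp add: L_def)
  also have "\<dots> = (\<Sum>k<length b + (length s + length a). F k)" unfolding F_def L_def by simp
  also have "\<dots> = (\<Sum>k<length b. F k) + ((\<Sum>k<length s. F (length b + k)) + (\<Sum>k<length a. F (length b + (length s + k))))"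
    by (simp add: sum_lessThan_add)
  also have "(\<Sum>k<length b. F k) = (\<Sum>k<length b. if b!k = i then sc_moment (take k b) * sc_moment (rev s @ a @ drop (Suc k) b) else 0)"
  proof (rule sum.cong)
    fix k assume k: "k \<in> {..<length b}"
    have "sc_moment (drop (Suc k) b @ rev s @ a) = sc_moment (rev s @ a @ drop (Suc k) b)"
      using sc_moment_append_commute[of "drop (Suc k) b" "rev s @ a"] by simp
    then show "F k = (if b!k = i then sc_moment (take k b) * sc_moment (rev s @ a @ drop (Suc k) b) else 0)"
      using k by (simp add: F_def L_def nth_append)
  qed simp
  also have "(\<Sum>k<length a. F (length b + (length s + k))) =
     (\<Sum>k<length a. if a!k = i then sc_moment (drop (Suc k) a) * sc_moment (rev s @ take k a @ b) else 0)"
  proof (rule sum.cong)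
    fix k assume k: "k \<in> {..<length a}"
    have "sc_moment (b @ rev s @ take k a) = sc_moment (rev s @ take k a @ b)"
      using sc_moment_append_commute[of b "rev s @ take k a"] by simp
    then show "F (length b + (length s + k)) = (if a!k = i then sc_moment (drop (Suc k) a) * sc_moment (rev s @ take k a @ b) else 0)"
      using k by (simp add: F_def L_def nth_append mult.commute)
  qed simp
  also have "(\<Sum>k<length s. F (length b + k)) =
     (\<Sum>k<length s. (\<lambda>k. if s!k = i then sc_moment (rev (take k s) @ a) * sc_moment (rev (drop (Suc k) s) @ b) else 0) (length s - Suc k))"
  proof (rule sum.cong)
    fix k assume k: "k \<in> {..<length s}"
    let ?K = "length s - Suc k"
    have t: "take k (rev s) = rev (drop (Suc ?K) s)" using k by (simp add: rev_drop)
    have d: "drop (Suc k) (rev s) = rev (take ?K s)" using k by (simp add: rev_take)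
    have "sc_moment (b @ rev (drop (Suc ?K) s)) = sc_moment (rev (drop (Suc ?K) s) @ b)"
      by (rule sc_moment_append_commute)
    then show "F (length b + k) = (\<lambda>k. if s!k = i then sc_moment (rev (take k s) @ a) * sc_moment (rev (drop (Suc k) s) @ b) else 0) ?K"
      using k by (simp add: F_def L_def nth_append t d rev_nth mult.commute)
  qed simp
  also have "\<dots> = (\<Sum>k<length s. if s!k = i then sc_moment (rev (take k s) @ a) * sc_moment (rev (drop (Suc k) s) @ b) else 0)"
    by (rule sum.nat_diff_reindex)
  finally show ?thesis by (simp add: add.assoc add.commute add.left_commute)
qed

section \<open>The operators on monomials\<close>

text \<open>For \<open>w = B X\<^sub>w\<^sub>!\<^sub>k C\<close>, \<open>cyc_cut w k\<close> is the word \<open>C B\<close> contributed to the cyclic derivative.\<close>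

definition cyc_cut :: "nat list \<Rightarrow> nat \<Rightarrow> nat list" where
  "cyc_cut w k = drop (Suc k) w @ take k w"

lemma set_cyc_cut: "set (cyc_cut w k) \<subseteq> set w"
  by (auto simp: cyc_cut_def dest: in_set_dropD in_set_takeD)

definition ncD_word :: "nat \<Rightarrow> nat list \<Rightarrow> complex \<Rightarrow> ncpoly" where
  "ncD_word j w c = (\<Sum>k<length w. if w!k = j then single (cyc_cut w k) c else 0)"

definition ncpartial_word :: "nat \<Rightarrow> nat list \<Rightarrow> complex \<Rightarrow> nctens" where
  "ncpartial_word j w c = (\<Sum>k<length w. if w!k = j then single (take k w, drop (Suc k) w) c else 0)"

definition tauE_pair :: "nat list \<times> nat list \<Rightarrow> complex \<Rightarrow> ncpoly" where
  "tauE_pair x c = (case x of (u, v) \<Rightarrow> single u (c * of_nat (sc_moment v)) + single v (of_nat (sc_moment u) * c))"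

definition ncN_word :: "nat list \<Rightarrow> complex \<Rightarrow> ncpoly" where
  "ncN_word w c = single w (of_nat (length w) * c)"

definition inner_tau2_pair :: "nat list \<times> nat list \<Rightarrow> complex \<Rightarrow> nat list \<times> nat list \<Rightarrow> complex \<Rightarrow> complex" where
  "inner_tau2_pair x c y d = (case x of (u, v) \<Rightarrow> case y of (u', v') \<Rightarrow>
     cnj c * d * of_nat (sc_moment (rev u @ u')) * of_nat (sc_moment (rev v @ v')))"

definition inner_tau_word :: "nat list \<Rightarrow> complex \<Rightarrow> nat list \<Rightarrow> complex \<Rightarrow> complex" where
  "inner_tau_word u c v d = cnj c * d * of_nat (sc_moment (rev u @ v))"

lemma ncD_linext: "ncD j p = linext (ncD_word j) p"
  unfolding ncD_def linext_def ncD_word_def cyc_cut_def ..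

lemma ncpartial_linext: "ncpartial j p = linext (ncpartial_word j) p"
  unfolding ncpartial_def linext_def ncpartial_word_def ..

lemma tauE_linext: "tauE x = linext tauE_pair x"
  unfolding tauE_def linext_def tauE_pair_def by (rule sum.cong) auto

lemma ncN_linext: "ncN p = linext ncN_word p"
  unfolding ncN_def linext_def ncN_word_def ..

lemma tau_linext: "tau p = linext (\<lambda>w c. c * of_nat (sc_moment w)) p"
  unfolding tau_def linext_def ..

lemma ncstar_linext: "ncstar p = linext (\<lambda>w c. single (rev w) (cnj c)) p"
  unfolding ncstar_def linext_def ..

lemma ncmult_linext: "ncmult p q = linext (\<lambda>u c. linext (\<lambda>v d. single (u @ v) (c * d)) q) p"
  unfolding ncmult_def linext_def ..

lemma inner_tau2_linext: "inner_tau2 x y = linext (\<lambda>a c. linext (inner_tau2_pair a c) y) x"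
  unfolding inner_tau2_def linext_def inner_tau2_pair_def by (simp add: case_prod_beta')

lemma coeff_additive_ncD_word: "coeff_additive (ncD_word j)"
  by (rule coeff_additiveI) (simp add: ncD_word_def single_add sum.distrib[symmetric] if_distrib cong: if_cong)

lemma coeff_additive_ncpartial_word: "coeff_additive (ncpartial_word j)"
  by (rule coeff_additiveI) (simp add: ncpartial_word_def single_add sum.distrib[symmetric] if_distrib cong: if_cong)

lemma coeff_additive_tauE_pair: "coeff_additive tauE_pair"
  by (rule coeff_additiveI) (auto simp: tauE_pair_def single_add algebra_simps split: prod.splits)

lemma coeff_additive_ncN_word: "coeff_additive ncN_word"
  by (rule coeff_additiveI) (simp add: ncN_word_def single_add algebra_simps)

lemma coeff_additive_inner_tau2_left: "coeff_additive (\<lambda>a c. linext (inner_tau2_pair a c) y)"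
proof (rule coeff_additiveI)
  fix w a b
  have "inner_tau2_pair w (a + b) = (\<lambda>y d. inner_tau2_pair w a y d + inner_tau2_pair w b y d)"
    by (auto simp: inner_tau2_pair_def algebra_simps fun_eq_iff split: prod.splits)
  then show "linext (inner_tau2_pair w (a + b)) y = linext (inner_tau2_pair w a) y + linext (inner_tau2_pair w b) y" by (simp add: linext_add_fun)
qed

lemma coeff_additive_inner_tau_word: "coeff_additive (inner_tau_word u c)"
  by (rule coeff_additiveI) (simp add: inner_tau_word_def algebra_simps)

lemma coeff_additive_tau: "coeff_additive (\<lambda>w c. c * of_nat (sc_moment w))"
  by (rule coeff_additiveI) (simp add: algebra_simps)

lemma inner_tau_linext: "inner_tau p q = linext (\<lambda>u c. linext (inner_tau_word u c) q) p"
proof -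
  have a1: "coeff_additive (\<lambda>u c. linext (\<lambda>v d. single (u @ v) (c * d)) q)"
    by (rule coeff_additiveI) (simp add: linext_def single_add distrib_right sum.distrib)
  have a2: "coeff_additive (\<lambda>w c. single (rev w) (cnj c))" by (rule coeff_additiveI) (simp add: single_add)
  have a3: "coeff_additive (\<lambda>u c. linext (\<lambda>v d. single (rev u @ v) (cnj c * d)) q)"
    by (rule coeff_additiveI) (simp add: linext_def single_add distrib_right sum.distrib)
  have "inner_tau p q = tau (linext (\<lambda>u c. linext (\<lambda>v d. single (u @ v) (c * d)) q) (linext (\<lambda>w c. single (rev w) (cnj c)) p))"
    unfolding inner_tau_def ncmult_linext ncstar_linext ..
  also have "\<dots> = tau (linext (\<lambda>w c. linext (\<lambda>v d. single (rev w @ v) (cnj c * d)) q) p)"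
    by (simp add: linext_comp[OF a1] linext_single[OF a1])
  also have "\<dots> = linext (\<lambda>w c. linext (\<lambda>v d. linext (\<lambda>w c. c * of_nat (sc_moment w)) (single (rev w @ v) (cnj c * d))) q) p"
    unfolding tau_linext by (simp add: linext_comp[OF coeff_additive_tau])
  also have "\<dots> = linext (\<lambda>u c. linext (inner_tau_word u c) q) p"
    by (simp add: linext_single[OF coeff_additive_tau] inner_tau_word_def[abs_def])
  finally show ?thesis .
qed

lemma inner_tau_diff_right: "inner_tau r (p - q) = inner_tau r p - inner_tau r q"
  unfolding inner_tau_linext by (simp add: linext_diff[OF coeff_additive_inner_tau_word] linext_diff_fun)

lemma inner_tau_faithful: assumes "inner_tau r r = 0" shows "r = 0"
proof -
  have "(\<Sum>u\<in>keys r. \<Sum>v\<in>keys r. cnj (lookup r u) * lookup r v * of_nat (sc_moment (rev u @ v))) = 0"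
    using assms unfolding inner_tau_linext linext_def inner_tau_word_def .
  then have "\<forall>u\<in>keys r. lookup r u = 0" by (rule sc_moment_gram_faithful[rotated]) simp
  then show ?thesis by (intro poly_mapping_eqI) (auto simp: in_keys_iff)
qed

lemma ncD_add: "ncD j (a + b) = ncD j a + ncD j b" by (simp add: ncD_linext linext_add[OF coeff_additive_ncD_word])

lemma ncD_diff: "ncD j (p - q) = ncD j p - ncD j q"
  by (simp add: ncD_linext linext_diff[OF coeff_additive_ncD_word])

lemma ncpartial_add: "ncpartial j (a + b) = ncpartial j a + ncpartial j b"
  by (simp add: ncpartial_linext linext_add[OF coeff_additive_ncpartial_word])

lemma tauE_add: "tauE (a + b) = tauE a + tauE b" by (simp add: tauE_linext linext_add[OF coeff_additive_tauE_pair])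

lemma ncN_add: "ncN (a + b) = ncN a + ncN b" by (simp add: ncN_linext linext_add[OF coeff_additive_ncN_word])

lemma ncD_zero: "ncD j 0 = 0" by (simp add: ncD_linext)

lemma ncpartial_zero: "ncpartial j 0 = 0" by (simp add: ncpartial_linext)

lemma tauE_zero: "tauE 0 = 0" by (simp add: tauE_linext)

lemma ncN_zero: "ncN 0 = 0" by (simp add: ncN_linext)

lemma ncD_single: "ncD j (single w c) = ncD_word j w c"
  by (simp add: ncD_linext linext_single[OF coeff_additive_ncD_word])

lemma ncpartial_ncD_word: "ncpartial i (ncD_word j w c) = (\<Sum>k<length w. if w!k = j then ncpartial_word i (cyc_cut w k) c else 0)"
  unfolding ncpartial_linext ncD_word_def by (simp add: linext_sum_if_single[OF coeff_additive_ncpartial_word])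

definition words :: "nat \<Rightarrow> nat list set" where "words n = {w. set w \<subseteq> {..<n}}"

definition word_pairs :: "nat \<Rightarrow> (nat list \<times> nat list) set" where
  "word_pairs n = {(u, v). set u \<subseteq> {..<n} \<and> set v \<subseteq> {..<n}}"

lemma ncpolys_supported_in: "ncpolys n = supported_in (words n)"
  by (auto simp: ncpolys_def supported_in_def words_def)

lemma ncD_supported: assumes "g \<in> supported_in (words n)" shows "ncD j g \<in> supported_in (words n)"
  unfolding ncD_linext
proof (rule supported_in_linext)
  fix w c assume "w \<in> keys g"
  then have w: "set w \<subseteq> {..<n}" using keys_supported_in[OF assms] by (simp add: words_def)
  show "ncD_word j w c \<in> supported_in (words n)"
    unfolding ncD_word_def using w set_cyc_cut[of w]
    by (intro supported_in_sum supported_in_if supported_in_single) (auto simp: words_def)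
qed

lemma ncpartial_supported: assumes "g \<in> supported_in (words n)" shows "ncpartial j g \<in> supported_in (word_pairs n)"
  unfolding ncpartial_linext
proof (rule supported_in_linext)
  fix w c assume "w \<in> keys g"
  then have w: "set w \<subseteq> {..<n}" using keys_supported_in[OF assms] by (simp add: words_def)
  show "ncpartial_word j w c \<in> supported_in (word_pairs n)"
    unfolding ncpartial_word_def using w
    by (intro supported_in_sum supported_in_if supported_in_single)
       (auto simp: word_pairs_def subset_iff dest: in_set_takeD in_set_dropD)
qed

section \<open>The adjoint of the free difference quotient\<close>

definition partial_adj_mono :: "nat \<Rightarrow> nat list \<Rightarrow> nat list \<Rightarrow> complex \<Rightarrow> ncpoly" where
  "partial_adj_mono i a b c = single (a @ i # b) c
     - (\<Sum>k<length b. if b!k = i then single (a @ drop (Suc k) b) (c * of_nat (sc_moment (take k b))) else 0)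
     - (\<Sum>k<length a. if a!k = i then single (take k a @ b) (c * of_nat (sc_moment (drop (Suc k) a))) else 0)"

definition partial_adj_pair :: "nat \<Rightarrow> nat list \<times> nat list \<Rightarrow> complex \<Rightarrow> ncpoly" where
  "partial_adj_pair i x c = (case x of (a, b) \<Rightarrow> partial_adj_mono i a b c)"

definition partial_adj_explicit :: "nat \<Rightarrow> nctens \<Rightarrow> ncpoly" where
  "partial_adj_explicit i \<xi> = linext (partial_adj_pair i) \<xi>"

lemma coeff_additive_partial_adj_pair: "coeff_additive (partial_adj_pair i)"
  by (rule coeff_additiveI) (auto simp: partial_adj_pair_def partial_adj_mono_def single_add distrib_right sum.distrib[symmetric] if_distrib
      algebra_simps split: prod.splits cong: if_cong)

lemma partial_adj_explicit_add:
  "partial_adj_explicit j (a + b) = partial_adj_explicit j a + partial_adj_explicit j b"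
  by (simp add: partial_adj_explicit_def linext_add[OF coeff_additive_partial_adj_pair])

lemma partial_adj_explicit_zero: "partial_adj_explicit j 0 = 0" by (simp add: partial_adj_explicit_def)

lemma mult_if_zero: "(x::'a::mult_zero) * (if P then y else 0) = (if P then x * y else 0)"
  "(if P then y else 0) * x = (if P then y * x else 0)" by auto

lemma inner_partial_adj_mono:
  "(\<Sum>k<length s. if s!k = i then inner_tau2_pair (take k s, drop (Suc k) s) d (a, b) e else 0)
   = linext (inner_tau_word s d) (partial_adj_mono i a b e)"
proof -
  have "linext (inner_tau_word s d) (partial_adj_mono i a b e) = inner_tau_word s d (a @ i # b) e
     - (\<Sum>k<length b. if b!k = i then inner_tau_word s d (a @ drop (Suc k) b) (e * of_nat (sc_moment (take k b))) else 0)
     - (\<Sum>k<length a. if a!k = i then inner_tau_word s d (take k a @ b) (e * of_nat (sc_moment (drop (Suc k) a))) else 0)"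
    unfolding partial_adj_mono_def
    by (simp add: linext_diff[OF coeff_additive_inner_tau_word] linext_single[OF coeff_additive_inner_tau_word]
        linext_sum_if_single[OF coeff_additive_inner_tau_word])
  also have "\<dots> = cnj d * e * of_nat (sc_moment (rev s @ a @ i # b))
     - cnj d * e * of_nat (\<Sum>k<length b. if b!k = i then sc_moment (take k b) * sc_moment (rev s @ a @ drop (Suc k) b) else 0)
     - cnj d * e * of_nat (\<Sum>k<length a. if a!k = i then sc_moment (drop (Suc k) a) * sc_moment (rev s @ take k a @ b) else 0)"
    by (simp add: inner_tau_word_def sum_distrib_left of_nat_sum if_distrib[where f = of_nat] algebra_simps mult_if_zero cong: if_cong)
  also have "\<dots> = cnj d * e * of_nat (\<Sum>k<length s. if s!k = i then sc_moment (rev (take k s) @ a) * sc_moment (rev (drop (Suc k) s) @ b) else 0)"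
    by (subst sc_moment_letter_expansion) (simp add: algebra_simps)
  also have "\<dots> = (\<Sum>k<length s. if s!k = i then inner_tau2_pair (take k s, drop (Suc k) s) d (a, b) e else 0)"
    by (simp add: inner_tau2_pair_def sum_distrib_left of_nat_sum if_distrib[where f = of_nat] algebra_simps mult_if_zero cong: if_cong)
  finally show ?thesis ..
qed

lemma inner_tau2_partial_adjoint: "inner_tau2 (ncpartial i q) \<xi> = inner_tau q (partial_adj_explicit i \<xi>)"
proof -
  have "inner_tau2 (ncpartial i q) \<xi> = linext (\<lambda>s d. linext (\<lambda>a c. linext (inner_tau2_pair a c) \<xi>) (ncpartial_word i s d)) q"
    unfolding inner_tau2_linext ncpartial_linext by (rule linext_comp[OF coeff_additive_inner_tau2_left])
  also have "\<dots> = linext (\<lambda>s d. linext (\<lambda>x e. linext (inner_tau_word s d) (partial_adj_pair i x e)) \<xi>) q"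
  proof (rule linext_cong)
    fix s d
    have "linext (\<lambda>a c. linext (inner_tau2_pair a c) \<xi>) (ncpartial_word i s d) =
        (\<Sum>k<length s. if s!k = i then linext (inner_tau2_pair (take k s, drop (Suc k) s) d) \<xi> else 0)"
      unfolding ncpartial_word_def by (simp add: linext_sum_if_single[OF coeff_additive_inner_tau2_left])
    also have "\<dots> = linext (\<lambda>x e. \<Sum>k<length s. if s!k = i then inner_tau2_pair (take k s, drop (Suc k) s) d x e else 0) \<xi>"
      by (simp add: linext_sum_fun linext_if_fun)
    also have "\<dots> = linext (\<lambda>x e. linext (inner_tau_word s d) (partial_adj_pair i x e)) \<xi>"
      by (rule linext_cong) (auto simp: partial_adj_pair_def inner_partial_adj_mono split: prod.splits)
    finally show "linext (\<lambda>a c. linext (inner_tau2_pair a c) \<xi>) (ncpartial_word i s d) =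
        linext (\<lambda>x e. linext (inner_tau_word s d) (partial_adj_pair i x e)) \<xi>" .
  qed
  also have "\<dots> = inner_tau q (partial_adj_explicit i \<xi>)"
    unfolding inner_tau_linext partial_adj_explicit_def by (rule linext_cong) (simp add: linext_comp[OF coeff_additive_inner_tau_word])
  finally show ?thesis .
qed

lemma partial_adj_explicit_supported:
  assumes "i < n" "\<xi> \<in> supported_in (word_pairs n)"
  shows "partial_adj_explicit i \<xi> \<in> supported_in (words n)"
  unfolding partial_adj_explicit_def
proof (rule supported_in_linext)
  fix x c assume "x \<in> keys \<xi>"
  moreover obtain a b where x: "x = (a, b)" by (cases x)
  ultimately have ab: "set a \<subseteq> {..<n}" "set b \<subseteq> {..<n}"
    using keys_supported_in[OF assms(2)] by (auto simp: word_pairs_def)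
  show "partial_adj_pair i x c \<in> supported_in (words n)"
    unfolding x partial_adj_pair_def prod.case partial_adj_mono_def using assms(1) ab
    by (intro supported_in_diff supported_in_sum supported_in_if supported_in_single)
      (auto simp: words_def dest: in_set_dropD in_set_takeD)
qed

text \<open>\<open>partial_adj\<close> is defined by THE, so it must be shown that the adjoint is unique; this is
  where faithfulness of \<open>\<tau>\<close> enters.\<close>

lemma partial_adj_eq_explicit:
  assumes "i < n" "\<xi> \<in> supported_in (word_pairs n)"
  shows "partial_adj n i \<xi> = partial_adj_explicit i \<xi>"
  unfolding partial_adj_def
proof (rule the_equality)
  show "partial_adj_explicit i \<xi> \<in> ncpolys n \<and>
      (\<forall>q\<in>ncpolys n. inner_tau2 (ncpartial i q) \<xi> = inner_tau q (partial_adj_explicit i \<xi>))"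
    using partial_adj_explicit_supported[OF assms] by (simp add: ncpolys_supported_in inner_tau2_partial_adjoint)
next
  fix p assume p: "p \<in> ncpolys n \<and> (\<forall>q\<in>ncpolys n. inner_tau2 (ncpartial i q) \<xi> = inner_tau q p)"
  define r where "r = p - partial_adj_explicit i \<xi>"
  have r: "r \<in> ncpolys n" using p partial_adj_explicit_supported[OF assms] by (simp add: r_def ncpolys_supported_in supported_in_diff)
  have "inner_tau r p = inner_tau r (partial_adj_explicit i \<xi>)"
    using p r by (simp add: inner_tau2_partial_adjoint[symmetric])
  moreover have "inner_tau r r = inner_tau r p - inner_tau r (partial_adj_explicit i \<xi>)"
    unfolding r_def by (rule inner_tau_diff_right)
  ultimately have "inner_tau r r = 0" by simp
  then have "r = 0" by (rule inner_tau_faithful)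
  then show "p = partial_adj_explicit i \<xi>" by (simp add: r_def)
qed

section \<open>Cyclic cuts of a word\<close>

lemma length_cyc_cut: "k < length w \<Longrightarrow> length (cyc_cut w k) = length w - 1"
  by (simp add: cyc_cut_def)

lemma nth_cyc_cut: assumes "k < length w" "t < length w - 1"
  shows "cyc_cut w k ! t = w ! ((k + 1 + t) mod length w)"
proof (cases "t < length w - Suc k")
  case True
  then have "k + 1 + t < length w" by auto
  then show ?thesis using True assms by (simp add: cyc_cut_def nth_append add.commute add.left_commute)
next
  case False
  let ?m = "length w"
  have e: "k + 1 + t = (t - (?m - Suc k)) + ?m" using False assms by auto
  have x: "t - (?m - Suc k) < ?m" using assms by auto
  have "(k + 1 + t) mod ?m = t - (?m - Suc k)" by (simp only: e mod_add_self2) (simp add: x)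
  then show ?thesis using False assms by (simp add: cyc_cut_def nth_append)
qed

lemma cyc_cut_snoc: "k < length w \<Longrightarrow> cyc_cut w k @ [w!k] = rotate (Suc k) w"
proof -
  assume k: "k < length w"
  have "cyc_cut w k @ [w!k] = drop (Suc k) w @ take (Suc k) w"
    using k by (simp add: cyc_cut_def take_Suc_conv_app_nth)
  also have "\<dots> = rotate (Suc k) w"
  proof (cases "Suc k = length w")
    case True then show ?thesis by simp
  next
    case False
    then have "Suc k mod length w = Suc k" using k by simp
    then show ?thesis by (simp add: rotate_drop_take)
  qed
  finally show ?thesis .
qed

lemma cyc_cut_rotate:
  assumes l: "l < length w" and k': "k' < length w - 1"
  shows "cyc_cut w ((l + 1 + k') mod length w) = drop (Suc k') (cyc_cut w l) @ [w!l] @ take k' (cyc_cut w l)"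
proof -
  let ?m = "length w" and ?c = "cyc_cut w l"
  have lc: "length ?c = ?m - 1" using l by (rule length_cyc_cut)
  have Kc: "Suc k' mod length (?c @ [w!l]) = Suc k'" using lc k' l by simp
  have "cyc_cut w ((l + 1 + k') mod ?m) @ [w ! ((l + 1 + k') mod ?m)] = rotate (Suc ((l + 1 + k') mod ?m)) w"
  proof (rule cyc_cut_snoc)
    show "(l + 1 + k') mod ?m < ?m" using l by (intro mod_less_divisor) linarith
  qed
  also have "\<dots> = rotate (Suc ((l + 1 + k') mod ?m) mod ?m) w" by (rule rotate_conv_mod)
  also have "\<dots> = rotate (Suc (l + 1 + k')) w" by (simp only: mod_Suc_eq rotate_conv_mod[symmetric])
  also have "\<dots> = rotate (Suc k' + Suc l) w" by (rule arg_cong[where f = "\<lambda>n. rotate n w"]) simp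
  also have "\<dots> = rotate (Suc k') (rotate (Suc l) w)" by (rule rotate_rotate[symmetric])
  also have "\<dots> = rotate (Suc k') (?c @ [w!l])" by (simp only: cyc_cut_snoc[OF l])
  also have "\<dots> = drop (Suc k') ?c @ [w!l] @ take (Suc k') ?c"
    unfolding rotate_drop_take Kc using lc k' by simp
  also have "\<dots> = (drop (Suc k') ?c @ [w!l] @ take k' ?c) @ [?c ! k']"
    using lc k' by (simp add: take_Suc_conv_app_nth)
  finally show ?thesis by simp
qed

lemma cyc_cut_take: "k' < p' \<Longrightarrow> p' < length cl \<Longrightarrow>
  cyc_cut (take p' cl) k' = take (p' - k' - 1) (drop (Suc k') cl) @ take k' cl"
  by (simp add: cyc_cut_def drop_take min_def)

lemma cyc_cut_drop: "cyc_cut (drop (Suc p') cl) k'' = drop (Suc (p' + 1 + k'')) cl @ take k'' (drop (Suc p') cl)"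
  by (simp add: cyc_cut_def add.commute add.left_commute)

lemma rotated_parts_right:
  fixes cl :: "nat list" and x k' p' :: nat
  assumes "k' < p'" "p' < length cl"
  defines "v \<equiv> drop (Suc k') cl @ [x] @ take k' cl" and "p \<equiv> p' - k' - 1" and "q \<equiv> length cl - 1 - p'"
  shows "v ! p = cl ! p'" "drop (Suc p) v ! q = x" "take p v = take (p' - k' - 1) (drop (Suc k') cl)"
    "drop (Suc q) (drop (Suc p) v) = take k' cl" "take q (drop (Suc p) v) = drop (Suc p') cl"
    "length v = length cl" "length (drop (Suc p) v) = length cl - 1 - p"
proof -
  have L: "Suc (length cl - Suc 0) = length cl" using assms(2) by auto
  show "v ! p = cl ! p'" "drop (Suc p) v ! q = x" "take p v = take (p' - k' - 1) (drop (Suc k') cl)"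
    "drop (Suc q) (drop (Suc p) v) = take k' cl" "take q (drop (Suc p) v) = drop (Suc p') cl"
    "length v = length cl" "length (drop (Suc p) v) = length cl - 1 - p"
    using assms(1,2) by (auto simp: v_def p_def q_def nth_append L)
qed

lemma rotated_parts_left:
  fixes cl :: "nat list" and x K p' :: nat
  assumes "p' < K" "K < length cl"
  defines "v \<equiv> drop (Suc K) cl @ [x] @ take K cl" and "q \<equiv> length cl - 1 - K" and "p \<equiv> length cl - K + p'"
  shows "take p v ! q = x" "v ! p = cl ! p'"
    "take q (take p v) @ drop (Suc p) v = drop (Suc K) cl @ take (K - Suc p') (drop (Suc p') cl)"
    "drop (Suc q) (take p v) = take p' cl"
proof -
  have L: "length (drop (Suc K) cl) = q" using assms(2) by (simp add: q_def)
  have p: "p = Suc q + p'" using assms by (simp add: p_def q_def)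
  show "take p v ! q = x" using L assms(1) by (simp add: v_def p nth_append)
  have np: "\<not> (length cl + p' - K < length cl - Suc K)" using assms(1,2) by linarith
  show "v ! p = cl ! p'" using L assms np by (simp add: v_def p nth_append)
  show "take q (take p v) @ drop (Suc p) v = drop (Suc K) cl @ take (K - Suc p') (drop (Suc p') cl)"
    using L assms by (simp add: v_def p drop_take)
  have L1: "Suc (Suc (length cl - Suc 0)) - length cl = 1" using assms(2) by linarith
  show "drop (Suc q) (take p v) = take p' cl"
    using L assms by (simp add: v_def p min_def L1)
qed

lemma sum_lessThan_Sigma3:
  fixes a :: nat and b :: "nat \<Rightarrow> nat" and d :: "nat \<Rightarrow> nat \<Rightarrow> nat"
  shows "(\<Sum>k<a. \<Sum>p<b k. \<Sum>q<d k p. f k p q) =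
   (\<Sum>(k,p,q)\<in>(SIGMA k:{..<a}. SIGMA p:{..<b k}. {..<d k p}). (f k p q :: 'a::comm_monoid_add))"
proof -
  have "(\<Sum>k<a. \<Sum>p<b k. \<Sum>q<d k p. f k p q) = (\<Sum>k<a. \<Sum>(p,q)\<in>(SIGMA p:{..<b k}. {..<d k p}). f k p q)"
    by (rule sum.cong[OF refl], rule sum.Sigma) auto
  also have "\<dots> = (\<Sum>(k,p,q)\<in>(SIGMA k:{..<a}. SIGMA p:{..<b k}. {..<d k p}). f k p q)"
    by (rule sum.Sigma) auto
  finally show ?thesis .
qed

lemma mod_add_period: "a < (m::nat) \<Longrightarrow> b + c = a + m \<Longrightarrow> (b mod m + c) mod m = a"
  by (metis mod_add_left_eq mod_add_self2 mod_less)

section \<open>The identity on a monomial\<close>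

definition adj_corr_right :: "nat list \<Rightarrow> nat \<Rightarrow> complex \<Rightarrow> ncpoly" where
  "adj_corr_right v p c = (\<Sum>k<length (drop (Suc p) v). if drop (Suc p) v ! k = v!p then
      single (take p v @ drop (Suc k) (drop (Suc p) v)) (c * of_nat (sc_moment (take k (drop (Suc p) v)))) else 0)"

definition adj_corr_left :: "nat list \<Rightarrow> nat \<Rightarrow> complex \<Rightarrow> ncpoly" where
  "adj_corr_left v p c = (\<Sum>k<length (take p v). if take p v ! k = v!p then
      single (take k (take p v) @ drop (Suc p) v) (c * of_nat (sc_moment (drop (Suc k) (take p v)))) else 0)"

lemma partial_adj_explicit_ncpartial_word:
  "partial_adj_explicit i (ncpartial_word i v c) =
    (\<Sum>p<length v. if v!p = i then partial_adj_mono i (take p v) (drop (Suc p) v) c else 0)"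
  unfolding partial_adj_explicit_def ncpartial_word_def
  by (simp add: linext_sum_if_single[OF coeff_additive_partial_adj_pair] partial_adj_pair_def cong: if_cong)

lemma sum_single_const: "(\<Sum>p<m. single v c) = single v (of_nat m * c)"
  by (induction m) (simp_all add: single_add algebra_simps)

lemma sum_partial_adj_ncpartial_word:
  assumes "set v \<subseteq> {..<n}"
  shows "(\<Sum>i<n. partial_adj_explicit i (ncpartial_word i v c)) =
    single v (of_nat (length v) * c) - (\<Sum>p<length v. adj_corr_right v p c + adj_corr_left v p c)"
proof -
  have "(\<Sum>i<n. partial_adj_explicit i (ncpartial_word i v c)) =
      (\<Sum>p<length v. \<Sum>i<n. if v!p = i then partial_adj_mono i (take p v) (drop (Suc p) v) c else 0)"
    unfolding partial_adj_explicit_ncpartial_word by (rule sum.swap)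
  also have "\<dots> = (\<Sum>p<length v. partial_adj_mono (v!p) (take p v) (drop (Suc p) v) c)"
  proof (rule sum.cong)
    fix p assume "p \<in> {..<length v}"
    then have "v!p < n" using assms nth_mem by fastforce
    then show "(\<Sum>i<n. if v!p = i then partial_adj_mono i (take p v) (drop (Suc p) v) c else 0) = partial_adj_mono (v!p) (take p v) (drop (Suc p) v) c"
      by (simp add: sum.delta)
  qed simp
  also have "\<dots> = (\<Sum>p<length v. single v c - (adj_corr_right v p c + adj_corr_left v p c))"
  proof (rule sum.cong)
    fix p assume p: "p \<in> {..<length v}"
    then have "take p v @ v!p # drop (Suc p) v = v" by (simp add: id_take_nth_drop[symmetric])
    then show "partial_adj_mono (v!p) (take p v) (drop (Suc p) v) c = single v c - (adj_corr_right v p c + adj_corr_left v p c)"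
      unfolding partial_adj_mono_def adj_corr_right_def adj_corr_left_def by (simp add: algebra_simps)
  qed simp
  also have "\<dots> = single v (of_nat (length v) * c) - (\<Sum>p<length v. adj_corr_right v p c + adj_corr_left v p c)"
    by (simp add: sum_subtractf sum_single_const)
  finally show ?thesis .
qed

text \<open>A correction term of \<open>\<partial>\<^sub>i\<^sup>*\<partial>\<^sub>i \<D>\<^sub>j X\<^sub>w\<close> is indexed by three letters of \<open>w\<close>: the \<open>X\<^sub>j\<close> removed
  by \<open>\<D>\<^sub>j\<close>, the letter removed by \<open>\<partial>\<^sub>i\<close> and its partner under \<open>\<tau>\<close>. Read from another letter,
  the same three letters index a term of \<open>\<D>\<^sub>j (1 \<otimes> \<tau> + \<tau> \<otimes> 1) Tr \<J>\<D> X\<^sub>w\<close>; the two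
  indexings differ by a rotation of \<open>w\<close>.\<close>

definition right_corr_term :: "nat list \<Rightarrow> nat \<Rightarrow> complex \<Rightarrow> nat \<Rightarrow> nat \<Rightarrow> nat \<Rightarrow> ncpoly" where
  "right_corr_term w j c k p q = (if w!k = j \<and> drop (Suc p) (cyc_cut w k) ! q = cyc_cut w k ! p then
     single (take p (cyc_cut w k) @ drop (Suc q) (drop (Suc p) (cyc_cut w k))) (c * of_nat (sc_moment (take q (drop (Suc p) (cyc_cut w k)))))
     else 0)"

definition tauE_left_term :: "nat list \<Rightarrow> nat \<Rightarrow> complex \<Rightarrow> nat \<Rightarrow> nat \<Rightarrow> nat \<Rightarrow> ncpoly" where
  "tauE_left_term w j c l p' k' = (if cyc_cut w l ! p' = w!l \<and> cyc_cut w l ! k' = j then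
     single (cyc_cut (take p' (cyc_cut w l)) k') (c * of_nat (sc_moment (drop (Suc p') (cyc_cut w l)))) else 0)"

lemma adj_corr_right_as_terms:
  assumes "k < length w"
  shows "(if w!k = j then (\<Sum>p<length w - 1. adj_corr_right (cyc_cut w k) p c) else 0) =
     (\<Sum>p<length w - 1. \<Sum>q<length w - 1 - Suc p. right_corr_term w j c k p q)"
proof -
  have lc: "length (cyc_cut w k) = length w - 1" using assms by (rule length_cyc_cut)
  show ?thesis by (cases "w!k = j") (simp_all add: adj_corr_right_def right_corr_term_def lc)
qed

lemma tauE_left_as_terms:
  assumes "l < length w" "p' < length w - 1"
  shows "(if cyc_cut w l ! p' = w!l then
            ncD_word j (take p' (cyc_cut w l)) (c * of_nat (sc_moment (drop (Suc p') (cyc_cut w l)))) else 0) =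
      (\<Sum>k'<p'. tauE_left_term w j c l p' k')"
proof -
  have lc: "length (cyc_cut w l) = length w - 1" using assms(1) by (rule length_cyc_cut)
  show ?thesis
    using assms(2) by (cases "cyc_cut w l ! p' = w!l") (simp_all add: ncD_word_def tauE_left_term_def lc min_def cong: if_cong)
qed

lemma right_corr_term_rotate:
  assumes r: "l < length w" "p' < length w - 1" "k' < p'"
  shows "right_corr_term w j c ((l + 1 + k') mod length w) (p' - k' - 1) (length w - 2 - p') = tauE_left_term w j c l p' k'"
proof -
  let ?m = "length w"
  let ?cl = "cyc_cut w l"
  have lcl: "length ?cl = ?m - 1" using r by (simp add: length_cyc_cut)
  have k'm: "k' < ?m - 1" using r by simp
  have cr: "cyc_cut w ((l + 1 + k') mod ?m) = drop (Suc k') ?cl @ [w!l] @ take k' ?cl"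
    by (rule cyc_cut_rotate[OF r(1) k'm])
  have wk: "w ! ((l + 1 + k') mod ?m) = ?cl ! k'" using nth_cyc_cut[OF r(1), of k'] k'm by simp
  have q: "?m - 2 - p' = length ?cl - 1 - p'" using lcl by simp
  have p'c: "p' < length ?cl" using lcl r by simp
  note R1 = rotated_parts_right[OF r(3) p'c, of "w!l"]
  have ct: "cyc_cut (take p' ?cl) k' = take (p' - k' - 1) (drop (Suc k') ?cl) @ take k' ?cl"
    by (rule cyc_cut_take[OF r(3) p'c])
  show ?thesis
    unfolding right_corr_term_def tauE_left_term_def cr wk q R1 ct by (auto)
qed

lemma sum_right_corr_terms_reindex:
  fixes w :: "nat list"
  defines "m \<equiv> length w"
  shows "(\<Sum>(l,p',k')\<in>(SIGMA l:{..<m}. SIGMA p':{..<m-1}. {..<p'}). tauE_left_term w j c l p' k') =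
         (\<Sum>(k,p,q)\<in>(SIGMA k:{..<m}. SIGMA p:{..<m-1}. {..<m - 1 - Suc p}). right_corr_term w j c k p q)"
proof -
  define S where "S = (SIGMA l:{..<m}. SIGMA p':{..<m-1}. {..<p'})"
  define T where "T = (SIGMA k:{..<m}. SIGMA p:{..<m-1}. {..<m - 1 - Suc p})"
  define \<psi> where "\<psi> = (\<lambda>(l, p', k'). ((l + 1 + k') mod m, p' - k' - 1, m - 2 - p'))"
  define \<phi> where "\<phi> = (\<lambda>(k, p, q). ((k + (p + q + 2)) mod m, m - q - 2, m - p - q - 3))"
  have "(\<Sum>(l,p',k')\<in>S. tauE_left_term w j c l p' k') = (\<Sum>(k,p,q)\<in>T. right_corr_term w j c k p q)"
  proof (rule sum.reindex_bij_witness[where i = \<phi> and j = \<psi>])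
    fix a assume "a \<in> S"
    then obtain l p' k' where a: "a = (l, p', k')" and r: "l < m" "p' < m - 1" "k' < p'" by (auto simp: S_def)
    have "((l + 1 + k') mod m + (p' - k' - 1 + (m - 2 - p') + 2)) mod m = l"
      by (rule mod_add_period) (use r in linarith)+
    moreover have "m - (m - 2 - p') - 2 = p'" using r by linarith
    moreover have "m - (p' - k' - 1) - (m - 2 - p') - 3 = k'" using r by linarith
    ultimately show "\<phi> (\<psi> a) = a" by (simp only: a \<phi>_def \<psi>_def prod.case)
    have "(l + 1 + k') mod m < m" using r by simp
    moreover have "p' - k' - 1 < m - 1" using r by linarith
    moreover have "m - 2 - p' < m - 1 - Suc (p' - k' - 1)" using r by linarith
    ultimately show "\<psi> a \<in> T" by (simp only: a \<psi>_def T_def prod.case mem_Sigma_iff lessThan_iff)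
    show "(case \<psi> a of (k, p, q) \<Rightarrow> right_corr_term w j c k p q) = (case a of (l, p', k') \<Rightarrow> tauE_left_term w j c l p' k')"
      using right_corr_term_rotate[of l w p' k' j c] r by (simp add: a \<psi>_def m_def)
  next
    fix b assume "b \<in> T"
    then obtain k p q where b: "b = (k, p, q)" and r: "k < m" "p < m - 1" "q < m - 1 - Suc p" by (auto simp: T_def)
    have "((k + (p + q + 2)) mod m + (1 + (m - p - q - 3))) mod m = k"
      by (rule mod_add_period) (use r in linarith)+
    then have e1: "((k + (p + q + 2)) mod m + 1 + (m - p - q - 3)) mod m = k" by (simp only: add.assoc)
    have e2: "m - q - 2 - (m - p - q - 3) - 1 = p" using r by linarith
    have e3: "m - 2 - (m - q - 2) = q" using r by linarith
    show "\<psi> (\<phi> b) = b" by (simp only: b \<phi>_def \<psi>_def prod.case e1 e2 e3)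
    have "(k + (p + q + 2)) mod m < m" using r by simp
    moreover have "m - q - 2 < m - 1" using r by linarith
    moreover have "m - p - q - 3 < m - q - 2" using r by linarith
    ultimately show "\<phi> b \<in> S" by (simp only: b \<phi>_def S_def prod.case mem_Sigma_iff lessThan_iff)
  qed
  then show ?thesis by (simp only: S_def T_def)
qed

lemma adj_corr_right_eq_tauE_left:
  fixes w :: "nat list" and j :: nat and c :: complex
  shows "(\<Sum>k<length w. if w!k = j then (\<Sum>p<length w - 1. adj_corr_right (cyc_cut w k) p c) else 0) =
         (\<Sum>l<length w. \<Sum>p'<length w - 1. if cyc_cut w l ! p' = w!l then
            ncD_word j (take p' (cyc_cut w l)) (c * of_nat (sc_moment (drop (Suc p') (cyc_cut w l)))) else 0)"
proof -
  have "(\<Sum>k<length w. if w!k = j then (\<Sum>p<length w - 1. adj_corr_right (cyc_cut w k) p c) else 0) =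
     (\<Sum>k<length w. \<Sum>p<length w - 1. \<Sum>q<length w - 1 - Suc p. right_corr_term w j c k p q)"
    by (rule sum.cong[OF refl]) (simp add: adj_corr_right_as_terms)
  also have "\<dots> = (\<Sum>l<length w. \<Sum>p'<length w - 1. \<Sum>k'<p'. tauE_left_term w j c l p' k')"
    by (simp only: sum_lessThan_Sigma3 sum_right_corr_terms_reindex)
  also have "\<dots> = (\<Sum>l<length w. \<Sum>p'<length w - 1. if cyc_cut w l ! p' = w!l then
            ncD_word j (take p' (cyc_cut w l)) (c * of_nat (sc_moment (drop (Suc p') (cyc_cut w l)))) else 0)"
    by (intro sum.cong refl) (simp add: tauE_left_as_terms)
  finally show ?thesis .
qed

definition left_corr_term :: "nat list \<Rightarrow> nat \<Rightarrow> complex \<Rightarrow> nat \<Rightarrow> nat \<Rightarrow> nat \<Rightarrow> ncpoly" where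
  "left_corr_term w j c k p q = (if w!k = j \<and> take p (cyc_cut w k) ! q = cyc_cut w k ! p then
     single (take q (take p (cyc_cut w k)) @ drop (Suc p) (cyc_cut w k)) (c * of_nat (sc_moment (drop (Suc q) (take p (cyc_cut w k)))))
     else 0)"

definition tauE_right_term :: "nat list \<Rightarrow> nat \<Rightarrow> complex \<Rightarrow> nat \<Rightarrow> nat \<Rightarrow> nat \<Rightarrow> ncpoly" where
  "tauE_right_term w j c l p' k'' = (if cyc_cut w l ! p' = w!l \<and> drop (Suc p') (cyc_cut w l) ! k'' = j then
     single (cyc_cut (drop (Suc p') (cyc_cut w l)) k'') (of_nat (sc_moment (take p' (cyc_cut w l))) * c) else 0)"

lemma adj_corr_left_as_terms:
  assumes "k < length w"
  shows "(if w!k = j then (\<Sum>p<length w - 1. adj_corr_left (cyc_cut w k) p c) else 0) =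
     (\<Sum>p<length w - 1. \<Sum>q<p. left_corr_term w j c k p q)"
proof -
  have lc: "length (cyc_cut w k) = length w - 1" using assms by (rule length_cyc_cut)
  show ?thesis by (cases "w!k = j") (auto simp: adj_corr_left_def left_corr_term_def lc min_def intro!: sum.cong)
qed

lemma tauE_right_as_terms:
  assumes "l < length w" "p' < length w - 1"
  shows "(if cyc_cut w l ! p' = w!l then
            ncD_word j (drop (Suc p') (cyc_cut w l)) (of_nat (sc_moment (take p' (cyc_cut w l))) * c) else 0) =
      (\<Sum>k''<length w - 2 - p'. tauE_right_term w j c l p' k'')"
proof -
  have lc: "length (cyc_cut w l) = length w - 1" using assms(1) by (rule length_cyc_cut)
  show ?thesis
    using assms(2) by (cases "cyc_cut w l ! p' = w!l") (simp_all add: ncD_word_def tauE_right_term_def lc cong: if_cong)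
qed

lemma left_corr_term_rotate:
  assumes r: "l < length w" "p' < length w - 1" "k'' < length w - 2 - p'"
  shows "left_corr_term w j c ((l + 1 + (p' + 1 + k'')) mod length w) (length w - 1 - (p' + 1 + k'') + p') (length w - 2 - (p' + 1 + k''))
       = tauE_right_term w j c l p' k''"
proof -
  let ?m = "length w"
  let ?cl = "cyc_cut w l"
  let ?K = "p' + 1 + k''"
  have lcl: "length ?cl = ?m - 1" using r by (simp add: length_cyc_cut)
  have Km: "?K < ?m - 1" using r by linarith
  have Kc: "?K < length ?cl" using Km lcl by simp
  have pK: "p' < ?K" by simp
  have cr: "cyc_cut w ((l + 1 + ?K) mod ?m) = drop (Suc ?K) ?cl @ [w!l] @ take ?K ?cl"
    by (rule cyc_cut_rotate[OF r(1) Km])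
  have wk: "w ! ((l + 1 + ?K) mod ?m) = ?cl ! ?K" using nth_cyc_cut[OF r(1), of ?K] Km by simp
  have eq: "?m - 2 - ?K = length ?cl - 1 - ?K" using lcl by simp
  have ep: "?m - 1 - ?K + p' = length ?cl - ?K + p'" using lcl by simp
  note R2 = rotated_parts_left[OF pK Kc, of "w!l"]
  have dk: "drop (Suc p') ?cl ! k'' = ?cl ! ?K" using Kc by simp
  have kk: "?K - Suc p' = k''" by simp
  show ?thesis
    unfolding left_corr_term_def tauE_right_term_def cr wk eq ep R2 dk cyc_cut_drop kk by (auto simp: mult.commute)
qed

lemma sum_left_corr_terms_reindex:
  fixes w :: "nat list"
  defines "m \<equiv> length w"
  shows "(\<Sum>(l,p',k'')\<in>(SIGMA l:{..<m}. SIGMA p':{..<m-1}. {..<m - 2 - p'}). tauE_right_term w j c l p' k'') =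
         (\<Sum>(k,p,q)\<in>(SIGMA k:{..<m}. SIGMA p:{..<m-1}. {..<p}). left_corr_term w j c k p q)"
proof -
  define S where "S = (SIGMA l:{..<m}. SIGMA p':{..<m-1}. {..<m - 2 - p'})"
  define T where "T = (SIGMA k:{..<m}. SIGMA p:{..<m-1}. {..<p})"
  define \<psi> where "\<psi> = (\<lambda>(l, p', k''). ((l + 1 + (p' + 1 + k'')) mod m, m - 1 - (p' + 1 + k'') + p', m - 2 - (p' + 1 + k'')))"
  define \<phi> where "\<phi> = (\<lambda>(k, p, q). ((k + (1 + q)) mod m, p - q - 1, m - 2 - p))"
  have "(\<Sum>(l,p',k'')\<in>S. tauE_right_term w j c l p' k'') = (\<Sum>(k,p,q)\<in>T. left_corr_term w j c k p q)"
  proof (rule sum.reindex_bij_witness[where i = \<phi> and j = \<psi>])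
    fix a assume "a \<in> S"
    then obtain l p' k'' where a: "a = (l, p', k'')" and r: "l < m" "p' < m - 1" "k'' < m - 2 - p'" by (auto simp: S_def)
    have "((l + 1 + (p' + 1 + k'')) mod m + (1 + (m - 2 - (p' + 1 + k'')))) mod m = l"
      by (rule mod_add_period) (use r in linarith)+
    moreover have "m - 1 - (p' + 1 + k'') + p' - (m - 2 - (p' + 1 + k'')) - 1 = p'" using r by linarith
    moreover have "m - 2 - (m - 1 - (p' + 1 + k'') + p') = k''" using r by linarith
    ultimately show "\<phi> (\<psi> a) = a" by (simp only: a \<phi>_def \<psi>_def prod.case)
    have "(l + 1 + (p' + 1 + k'')) mod m < m" using r by simp
    moreover have "m - 1 - (p' + 1 + k'') + p' < m - 1" using r by linarith
    moreover have "m - 2 - (p' + 1 + k'') < m - 1 - (p' + 1 + k'') + p'" using r by linarith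
    ultimately show "\<psi> a \<in> T" by (simp only: a \<psi>_def T_def prod.case mem_Sigma_iff lessThan_iff)
    show "(case \<psi> a of (k, p, q) \<Rightarrow> left_corr_term w j c k p q) = (case a of (l, p', k'') \<Rightarrow> tauE_right_term w j c l p' k'')"
      using left_corr_term_rotate[of l w p' k'' j c] r by (simp add: a \<psi>_def m_def)
  next
    fix b assume "b \<in> T"
    then obtain k p q where b: "b = (k, p, q)" and r: "k < m" "p < m - 1" "q < p" by (auto simp: T_def)
    have "((k + (1 + q)) mod m + (1 + ((p - q - 1) + 1 + (m - 2 - p)))) mod m = k"
      by (rule mod_add_period) (use r in linarith)+
    then have e1: "((k + (1 + q)) mod m + 1 + ((p - q - 1) + 1 + (m - 2 - p))) mod m = k" by (simp only: add.assoc)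
    have e2: "m - 1 - ((p - q - 1) + 1 + (m - 2 - p)) + (p - q - 1) = p" using r by linarith
    have e3: "m - 2 - ((p - q - 1) + 1 + (m - 2 - p)) = q" using r by linarith
    show "\<psi> (\<phi> b) = b" by (simp only: b \<phi>_def \<psi>_def prod.case e1 e2 e3)
    have "(k + (1 + q)) mod m < m" using r by simp
    moreover have "p - q - 1 < m - 1" using r by linarith
    moreover have "m - 2 - p < m - 2 - (p - q - 1)" using r by linarith
    ultimately show "\<phi> b \<in> S" by (simp only: b \<phi>_def S_def prod.case mem_Sigma_iff lessThan_iff)
  qed
  then show ?thesis by (simp only: S_def T_def)
qed

lemma adj_corr_left_eq_tauE_right:
  fixes w :: "nat list" and j :: nat and c :: complex
  shows "(\<Sum>k<length w. if w!k = j then (\<Sum>p<length w - 1. adj_corr_left (cyc_cut w k) p c) else 0) =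
         (\<Sum>l<length w. \<Sum>p'<length w - 1. if cyc_cut w l ! p' = w!l then
            ncD_word j (drop (Suc p') (cyc_cut w l)) (of_nat (sc_moment (take p' (cyc_cut w l))) * c) else 0)"
proof -
  have "(\<Sum>k<length w. if w!k = j then (\<Sum>p<length w - 1. adj_corr_left (cyc_cut w k) p c) else 0) =
     (\<Sum>k<length w. \<Sum>p<length w - 1. \<Sum>q<p. left_corr_term w j c k p q)"
    by (rule sum.cong[OF refl]) (simp add: adj_corr_left_as_terms)
  also have "\<dots> = (\<Sum>l<length w. \<Sum>p'<length w - 1. \<Sum>k''<length w - 2 - p'. tauE_right_term w j c l p' k'')"
    by (simp only: sum_lessThan_Sigma3 sum_left_corr_terms_reindex)
  also have "\<dots> = (\<Sum>l<length w. \<Sum>p'<length w - 1. if cyc_cut w l ! p' = w!l then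
            ncD_word j (drop (Suc p') (cyc_cut w l)) (of_nat (sc_moment (take p' (cyc_cut w l))) * c) else 0)"
    by (intro sum.cong refl) (simp add: tauE_right_as_terms)
  finally show ?thesis .
qed

definition ncK_word :: "nat \<Rightarrow> nat list \<Rightarrow> complex \<Rightarrow> ncpoly" where
  "ncK_word j w c = (\<Sum>k<length w. if w!k = j then
      (\<Sum>p<length w - 1. adj_corr_right (cyc_cut w k) p c + adj_corr_left (cyc_cut w k) p c)
        - single (cyc_cut w k) (of_nat (length w) * c) else 0)"

lemma neg_partial_adj_ncD_single:
  assumes w: "set w \<subseteq> {..<n}"
  shows "- (\<Sum>i<n. partial_adj_explicit i (ncpartial i (ncD j (single w c)))) - ncD j (single w c) = ncK_word j w c"
proof -
  have "(\<Sum>i<n. partial_adj_explicit i (ncpartial i (ncD j (single w c)))) =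
      (\<Sum>i<n. \<Sum>k<length w. if w!k = j then partial_adj_explicit i (ncpartial_word i (cyc_cut w k) c) else 0)"
    by (simp add: ncD_single ncpartial_ncD_word partial_adj_explicit_def linext_sum_if[OF coeff_additive_partial_adj_pair] cong: if_cong)
  also have "\<dots> = (\<Sum>k<length w. if w!k = j then (\<Sum>i<n. partial_adj_explicit i (ncpartial_word i (cyc_cut w k) c)) else 0)"
    by (subst sum.swap) (intro sum.cong refl, simp)
  also have "\<dots> = (\<Sum>k<length w. if w!k = j then single (cyc_cut w k) (of_nat (length w - 1) * c) -
      (\<Sum>p<length w - 1. adj_corr_right (cyc_cut w k) p c + adj_corr_left (cyc_cut w k) p c) else 0)"
  proof (rule sum.cong[OF refl])
    fix k assume k: "k \<in> {..<length w}"
    have cut_in: "set (cyc_cut w k) \<subseteq> {..<n}" using set_cyc_cut[of w k] w by blast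
    show "(if w!k = j then (\<Sum>i<n. partial_adj_explicit i (ncpartial_word i (cyc_cut w k) c)) else 0) =
      (if w!k = j then single (cyc_cut w k) (of_nat (length w - 1) * c) -
      (\<Sum>p<length w - 1. adj_corr_right (cyc_cut w k) p c + adj_corr_left (cyc_cut w k) p c) else 0)"
      using sum_partial_adj_ncpartial_word[OF cut_in, of c] k by (simp add: length_cyc_cut)
  qed
  finally have A: "(\<Sum>i<n. partial_adj_explicit i (ncpartial i (ncD j (single w c)))) = \<dots>" .
  have B: "ncD j (single w c) = (\<Sum>k<length w. if w!k = j then single (cyc_cut w k) c else 0)"
    by (simp add: ncD_single ncD_word_def)
  have C: "single (cyc_cut w k) (of_nat (length w - 1) * c) = single (cyc_cut w k) (of_nat (length w) * c) - single (cyc_cut w k) c"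
    if "k < length w" for k
    using that by (simp add: of_nat_diff algebra_simps single_diff[symmetric])
  show ?thesis
    unfolding ncK_word_def A unfolding B sum_negf[symmetric] sum_subtractf[symmetric]
    by (rule sum.cong[OF refl]) (simp add: C, simp add: algebra_simps single_diff)
qed

lemma trace_ncpartial_ncD_single:
  assumes w: "set w \<subseteq> {..<n}"
  shows "(\<Sum>i<n. ncpartial i (ncD i (single w c))) = (\<Sum>l<length w. ncpartial_word (w!l) (cyc_cut w l) c)"
proof -
  have "(\<Sum>i<n. ncpartial i (ncD i (single w c))) = (\<Sum>i<n. \<Sum>l<length w. if w!l = i then ncpartial_word i (cyc_cut w l) c else 0)"
    by (simp add: ncD_single ncpartial_ncD_word cong: if_cong)
  also have "\<dots> = (\<Sum>l<length w. \<Sum>i<n. if w!l = i then ncpartial_word i (cyc_cut w l) c else 0)" by (rule sum.swap)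
  also have "\<dots> = (\<Sum>l<length w. ncpartial_word (w!l) (cyc_cut w l) c)"
  proof (rule sum.cong[OF refl])
    fix l assume "l \<in> {..<length w}"
    then have "w!l < n" using w nth_mem by fastforce
    then show "(\<Sum>i<n. if w!l = i then ncpartial_word i (cyc_cut w l) c else 0) = ncpartial_word (w!l) (cyc_cut w l) c"
      by (simp add: sum.delta)
  qed
  finally show ?thesis .
qed

lemma ncD_tauE_trace_single:
  assumes w: "set w \<subseteq> {..<n}"
  shows "ncD j (tauE (\<Sum>i<n. ncpartial i (ncD i (single w c)))) =
     (\<Sum>l<length w. \<Sum>p'<length w - 1. if cyc_cut w l ! p' = w!l then
            ncD_word j (take p' (cyc_cut w l)) (c * of_nat (sc_moment (drop (Suc p') (cyc_cut w l)))) else 0)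
   + (\<Sum>l<length w. \<Sum>p'<length w - 1. if cyc_cut w l ! p' = w!l then
            ncD_word j (drop (Suc p') (cyc_cut w l)) (of_nat (sc_moment (take p' (cyc_cut w l))) * c) else 0)"
proof -
  have ncD_tauE_pair: "ncD j (tauE_pair (u, v) e) =
      ncD_word j u (e * of_nat (sc_moment v)) + ncD_word j v (of_nat (sc_moment u) * e)" for u v e
    by (simp add: tauE_pair_def ncD_linext linext_add[OF coeff_additive_ncD_word] linext_single[OF coeff_additive_ncD_word])
  have "ncD j (tauE (\<Sum>i<n. ncpartial i (ncD i (single w c)))) =
    (\<Sum>l<length w. \<Sum>p'<length (cyc_cut w l). if cyc_cut w l ! p' = w!l then
        ncD j (tauE_pair (take p' (cyc_cut w l), drop (Suc p') (cyc_cut w l)) c) else 0)"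
    unfolding trace_ncpartial_ncD_single[OF w] tauE_linext ncpartial_word_def
    by (simp add: linext_sum[OF coeff_additive_tauE_pair] linext_sum_if_single[OF coeff_additive_tauE_pair]
        ncD_linext linext_sum[OF coeff_additive_ncD_word] linext_sum_if[OF coeff_additive_ncD_word]
        if_distrib[where f = "linext _"] linext_single[OF coeff_additive_tauE_pair] cong: if_cong)
  also have "\<dots> = (\<Sum>l<length w. \<Sum>p'<length w - 1. (if cyc_cut w l ! p' = w!l then
          ncD_word j (take p' (cyc_cut w l)) (c * of_nat (sc_moment (drop (Suc p') (cyc_cut w l)))) else 0)
        + (if cyc_cut w l ! p' = w!l then
          ncD_word j (drop (Suc p') (cyc_cut w l)) (of_nat (sc_moment (take p' (cyc_cut w l))) * c) else 0))"
    by (intro sum.cong refl) (simp_all add: length_cyc_cut ncD_tauE_pair)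
  finally show ?thesis by (simp add: sum.distrib)
qed

lemma ncD_tauE_minus_ncN_single:
  assumes w: "set w \<subseteq> {..<n}"
  shows "ncD j (tauE (\<Sum>i<n. ncpartial i (ncD i (single w c))) - ncN (single w c)) = ncK_word j w c"
proof -
  have ncN: "ncD j (ncN (single w c)) =
      (\<Sum>k<length w. if w!k = j then single (cyc_cut w k) (of_nat (length w) * c) else 0)"
    by (simp add: ncN_linext linext_single[OF coeff_additive_ncN_word] ncN_word_def ncD_single ncD_word_def)
  have split_if: "(if w!k = j then (\<Sum>p<length w - 1. adj_corr_right (cyc_cut w k) p c + adj_corr_left (cyc_cut w k) p c)
        - single (cyc_cut w k) (of_nat (length w) * c) else 0) =
      (if w!k = j then (\<Sum>p<length w - 1. adj_corr_right (cyc_cut w k) p c) else 0)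
      + (if w!k = j then (\<Sum>p<length w - 1. adj_corr_left (cyc_cut w k) p c) else 0)
      - (if w!k = j then single (cyc_cut w k) (of_nat (length w) * c) else 0)" for k
    by (simp add: sum.distrib)
  show ?thesis
    unfolding ncK_word_def ncD_diff ncD_tauE_trace_single[OF w] ncN split_if
      adj_corr_right_eq_tauE_left[symmetric] adj_corr_left_eq_tauE_right[symmetric]
    by (simp only: sum.distrib sum_subtractf)
qed

lemma neg_partial_adj_ncD_eq:
  assumes g: "g \<in> ncpolys n"
  shows "- (\<Sum>i<n. partial_adj_explicit i (ncpartial i (ncD j g))) - ncD j g =
    ncD j (tauE (\<Sum>i<n. ncpartial i (ncD i g)) - ncN g)"
proof -
  define lhs where "lhs g = - (\<Sum>i<n. partial_adj_explicit i (ncpartial i (ncD j g))) - ncD j g" for g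
  define rhs where "rhs g = ncD j (tauE (\<Sum>i<n. ncpartial i (ncD i g)) - ncN g)" for g
  have lhs_expand: "lhs g = linext (\<lambda>w c. lhs (single w c)) g"
    by (rule linext_expand)
      (simp_all add: lhs_def ncD_add ncpartial_add partial_adj_explicit_add sum.distrib
        ncD_zero ncpartial_zero partial_adj_explicit_zero)
  have rhs_expand: "rhs g = linext (\<lambda>w c. rhs (single w c)) g"
    by (rule linext_expand)
      (simp_all add: rhs_def ncD_add ncpartial_add tauE_add ncN_add sum.distrib
        ncD_zero ncpartial_zero tauE_zero ncN_zero ncD_diff)
  have "lhs g = rhs g"
    unfolding lhs_expand rhs_expand
  proof (rule linext_cong)
    fix w c assume "w \<in> keys g"
    then have w: "set w \<subseteq> {..<n}" using g by (auto simp: ncpolys_def)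
    show "lhs (single w c) = rhs (single w c)"
      unfolding lhs_def rhs_def neg_partial_adj_ncD_single[OF w] ncD_tauE_minus_ncN_single[OF w] ..
  qed
  then show ?thesis by (simp add: lhs_def rhs_def)
qed

lemma ncK_ncD:
  assumes g: "g \<in> ncpolys n" and j: "j < n" and f: "\<And>i. i < n \<Longrightarrow> f i = ncD i g"
  shows "ncK n f j = ncD j (tauE (\<Sum>i<n. ncpartial i (ncD i g)) - ncN g)"
proof -
  have gs: "g \<in> supported_in (words n)" using g by (simp add: ncpolys_supported_in)
  have "ncJadj n (ncJ f) j = (\<Sum>i<n. partial_adj_explicit i (ncpartial i (ncD j g)))"
    unfolding ncJadj_def ncJ_def f[OF j]
    by (rule sum.cong[OF refl], rule partial_adj_eq_explicit) (auto intro: ncpartial_supported ncD_supported gs)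
  then show ?thesis by (simp add: ncK_def f[OF j] neg_partial_adj_ncD_eq[OF g])
qed

section \<open>Euler's relation for cyclically symmetric polynomials\<close>

lemma cyc_symm_rotate1: assumes "cyc_symm g" shows "lookup g (rotate1 v) = lookup g v"
proof (cases v)
  case (Cons x xs)
  have "rotate1 v \<noteq> []" using Cons by simp
  then have "lookup g (rotate1 v) = lookup g (last (rotate1 v) # butlast (rotate1 v))"
    using assms unfolding cyc_symm_def by blast
  also have "last (rotate1 v) # butlast (rotate1 v) = v" using Cons by simp
  finally show ?thesis .
qed simp

lemma cyc_symm_rotate: assumes "cyc_symm g" shows "lookup g (rotate k v) = lookup g v"
  by (induction k) (simp_all add: cyc_symm_rotate1[OF assms])

lemma ncmult_single_1: "ncmult p (single y 1) = linext (\<lambda>u c. single (u @ y) c) p"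
proof -
  have a: "coeff_additive (\<lambda>v d. single (u @ v) (c * d))" for u c
    by (rule coeff_additiveI) (simp add: single_add algebra_simps)
  show ?thesis unfolding ncmult_linext by (simp add: linext_single[OF a])
qed

lemma coeff_additive_append: "coeff_additive (\<lambda>u c. single (u @ y) c)"
  by (rule coeff_additiveI) (simp add: single_add)

lemma sum_rotate_Suc: "(\<Sum>k<length w. single (rotate (Suc k) w) c) = (\<Sum>k<length w. single (rotate k w) c)"
proof -
  have "(\<Sum>k<Suc (length w). single (rotate k w) c) = single (rotate 0 w) c + (\<Sum>k<length w. single (rotate (Suc k) w) c)"
    by (rule sum.lessThan_Suc_shift)
  moreover have "(\<Sum>k<Suc (length w). single (rotate k w) c) = (\<Sum>k<length w. single (rotate k w) c) + single (rotate (length w) w) c"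
    by simp
  ultimately show ?thesis by (simp add: add.commute)
qed

lemma nchash_ncD_word:
  assumes "set w \<subseteq> {..<n}"
  shows "(\<Sum>i<n. linext (\<lambda>u c. single (u @ [i]) c) (ncD_word i w c)) = (\<Sum>k<length w. single (rotate k w) c)"
proof -
  have "(\<Sum>i<n. linext (\<lambda>u c. single (u @ [i]) c) (ncD_word i w c)) =
      (\<Sum>i<n. \<Sum>k<length w. if w!k = i then single (cyc_cut w k @ [i]) c else 0)"
    unfolding ncD_word_def by (simp add: linext_sum_if_single[OF coeff_additive_append])
  also have "\<dots> = (\<Sum>k<length w. \<Sum>i<n. if w!k = i then single (cyc_cut w k @ [i]) c else 0)" by (rule sum.swap)
  also have "\<dots> = (\<Sum>k<length w. single (rotate (Suc k) w) c)"
  proof (rule sum.cong[OF refl])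
    fix k assume k: "k \<in> {..<length w}"
    then have "w!k < n" using assms nth_mem by fastforce
    then show "(\<Sum>i<n. if w!k = i then single (cyc_cut w k @ [i]) c else 0) = single (rotate (Suc k) w) c"
      using k by (simp add: sum.delta cyc_cut_snoc)
  qed
  finally show ?thesis using sum_rotate_Suc[of w c] by (rule trans)
qed

text \<open>Summing the rotations of every word of a cyclically symmetric \<open>g\<close> counts each word
  \<open>z\<close> once for every \<open>k < length z\<close>, via the bijection \<open>(w, k) \<mapsto> (rotate k w, k)\<close>.\<close>

lemma linext_rotations_cyc_symm:
  assumes cs: "cyc_symm g"
  shows "linext (\<lambda>w c. \<Sum>k<length w. single (rotate k w) c) g = ncN g"
proof -
  let ?I = "SIGMA w:keys g. {..<length w}"
  have keys_rotate: "rotate k w \<in> keys g" if "w \<in> keys g" for k w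
    using that cyc_symm_rotate[OF cs, of k w] by (simp add: in_keys_iff)
  have "linext (\<lambda>w c. \<Sum>k<length w. single (rotate k w) c) g =
      (\<Sum>(w,k)\<in>?I. single (rotate k w) (lookup g w))"
    unfolding linext_def by (rule sum.Sigma) auto
  also have "\<dots> = (\<Sum>(z,k)\<in>?I. single z (lookup g z))"
  proof (rule sum.reindex_bij_witness[where j = "\<lambda>(w,k). (rotate k w, k)" and i = "\<lambda>(z,k). (rotate (length z - k) z, k)"])
    fix a assume "a \<in> ?I"
    then obtain w k where a: "a = (w, k)" and r: "w \<in> keys g" "k < length w" by auto
    show "(case (case a of (w, k) \<Rightarrow> (rotate k w, k)) of (z, k) \<Rightarrow> (rotate (length z - k) z, k)) = a"
      using r by (simp add: a rotate_rotate)
    show "(case a of (w, k) \<Rightarrow> (rotate k w, k)) \<in> ?I"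
      using r keys_rotate by (simp add: a)
    show "(case (case a of (w, k) \<Rightarrow> (rotate k w, k)) of (z, k) \<Rightarrow> single z (lookup g z)) =
        (case a of (w, k) \<Rightarrow> single (rotate k w) (lookup g w))"
      using cyc_symm_rotate[OF cs, of k w] by (simp add: a)
  next
    fix b assume "b \<in> ?I"
    then obtain z k where b: "b = (z, k)" and r: "z \<in> keys g" "k < length z" by auto
    show "(case (case b of (z, k) \<Rightarrow> (rotate (length z - k) z, k)) of (w, k) \<Rightarrow> (rotate k w, k)) = b"
      using r by (simp add: b rotate_rotate)
    show "(case b of (z, k) \<Rightarrow> (rotate (length z - k) z, k)) \<in> ?I"
      using r keys_rotate by (simp add: b)
  qed
  also have "\<dots> = (\<Sum>z\<in>keys g. \<Sum>k<length z. single z (lookup g z))"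
    by (rule sum.Sigma[symmetric]) auto
  also have "\<dots> = ncN g"
    unfolding ncN_def by (simp add: sum_single_const)
  finally show ?thesis .
qed

lemma nchash_ncD_ncvar:
  assumes g: "g \<in> ncpolys n" and cs: "cyc_symm g" and f: "\<And>i. i < n \<Longrightarrow> f i = ncD i g"
  shows "nchash n f ncvar = ncN g"
proof -
  have "nchash n f ncvar = (\<Sum>i<n. linext (\<lambda>u c. single (u @ [i]) c) (linext (ncD_word i) g))"
    unfolding nchash_def ncvar_def by (simp add: f ncmult_single_1 ncD_linext)
  also have "\<dots> = linext (\<lambda>w c. \<Sum>i<n. linext (\<lambda>u c. single (u @ [i]) c) (ncD_word i w c)) g"
    by (simp add: linext_comp[OF coeff_additive_append] linext_sum_fun)
  also have "\<dots> = linext (\<lambda>w c. \<Sum>k<length w. single (rotate k w) c) g"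
  proof (rule linext_cong)
    fix w c assume "w \<in> keys g"
    then have "set w \<subseteq> {..<n}" using g by (auto simp: ncpolys_def)
    then show "(\<Sum>i<n. linext (\<lambda>u c. single (u @ [i]) c) (ncD_word i w c)) = (\<Sum>k<length w. single (rotate k w) c)"
      by (rule nchash_ncD_word)
  qed
  also have "\<dots> = ncN g" by (rule linext_rotations_cyc_symm[OF cs])
  finally show ?thesis .
qed

theorem mainTheorem6:
  fixes n :: nat and g :: ncpoly and f :: "nat \<Rightarrow> ncpoly"
  assumes "g \<in> ncpolys n"
    and "cyc_symm g"
    and "\<And>i. i < n \<Longrightarrow> f i = ncD i g"
  shows "\<forall>j<n.
      ncK n f j = ncD j (tauE (\<Sum>i<n. ncJ f i i) - nchash n f ncvar)
    \<and> ncD j (tauE (\<Sum>i<n. ncJ f i i) - nchash n f ncvar)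
        = ncD j (tauE (ncTr n (ncJ (\<lambda>i. ncD i g))) - ncN g)"
proof (intro allI impI)
  fix j assume j: "j < n"
  have "(\<Sum>i<n. ncJ f i i) = (\<Sum>i<n. ncpartial i (ncD i g))"
    by (rule sum.cong) (simp_all add: ncJ_def assms(3))
  moreover have "ncTr n (ncJ (\<lambda>i. ncD i g)) = (\<Sum>i<n. ncpartial i (ncD i g))"
    by (simp add: ncTr_def ncJ_def)
  ultimately show "ncK n f j = ncD j (tauE (\<Sum>i<n. ncJ f i i) - nchash n f ncvar)
    \<and> ncD j (tauE (\<Sum>i<n. ncJ f i i) - nchash n f ncvar)
        = ncD j (tauE (ncTr n (ncJ (\<lambda>i. ncD i g))) - ncN g)"
    using nchash_ncD_ncvar[OF assms] ncK_ncD[OF assms(1) j assms(3)] by simp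
qed

end
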